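(* Let $\beta:\mathbf D\to\mathbf R_{>0}$ satisfy $\sum_{d\in\mathbf D}\beta(d)^p<\infty$ for some $0<p<1/2$. Then the group $\bigoplus_{\mathbf D}\mathbf Z$ is contained in the closure of $\mathbf Z_{fr}$ inside the topological group $\mathrm{Aut}(\mathbf Z^{\mathbf D},m_\beta^{\mathbf D})$ (equipped with the weak topology).
   Context: $\mathbf D=\{a/2^n:n\ge1,0\le a\le2^n-1\}\subset[0,1)$. For $b>0$, $m_b(\{n\})=e^{-n^2b/2}/Z_b$ with $Z_b=\sum_ke^{-k^2b/2}$; $m_\beta^{\mathbf D}=\bigotimes_dm_{\beta(d)}$ on $\mathbf Z^{\mathbf D}$ (product $\sigma$-algebra). $\mathbf Z_{fr}$: maps $g:\mathbf D\to\mathbf Z$ constant on each $[d_j,d_{j+1})\cap\mathbf D$ for some standard dyadic partition $0=d_1<\dots<d_{n+1}=1$ (each $(d_j,d_{j+1})$ of the form $(a/2^k,(a+1)/2^k)$); $\bigoplus_{\mathbf D}\mathbf Z$: finitely supported maps $\mathbf D\to\mathbf Z$. Both act on $\mathbf Z^{\mathbf D}$ by $(g\cdot x)(d)=g(d)+x(d)$ and are regarded (via this action) as subgroups of $\mathrm{Aut}(\mathbf Z^{\mathbf D},m_\beta^{\mathbf D})$, the group of nonsingular transformations. The weak topology: $g_n\to g$ iff $\frac{d(g_n)_*m_\beta^{\mathbf D}}{dm_\beta^{\mathbf D}}\to\frac{dg_*m_\beta^{\mathbf D}}{dm_\beta^{\mathbf D}}$ in $L^1(m_\beta^{\mathbf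 D})$ and $m_\beta^{\mathbf D}(g^{-1}A\,\Delta\,g_n^{-1}A)\to0$ for every measurable $A$. *)

theory Defs
  imports "HOL-Probability.Probability"
begin

definition dyadics :: "real set" where
  "dyadics = {real a / 2 ^ n | a n. n \<ge> 1 \<and> a \<le> 2 ^ n - 1}"

definition Zb :: "real \<Rightarrow> real" where
  "Zb b = infsum (\<lambda>k::int. exp (- (real_of_int k ^ 2) * b / 2)) UNIV"

definition mb :: "real \<Rightarrow> int measure" where
  "mb b = point_measure UNIV (\<lambda>n. ennreal (exp (- (real_of_int n ^ 2) * b / 2) / Zb b))"

definition mD :: "(real \<Rightarrow> real) \<Rightarrow> (real \<Rightarrow> int) measure" where
  "mD \<beta> = (\<Pi>\<^sub>M d\<in>dyadics. mb (\<beta> d))"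

definition shift :: "(real \<Rightarrow> int) \<Rightarrow> (real \<Rightarrow> int) \<Rightarrow> (real \<Rightarrow> int)" where
  "shift g x = (\<lambda>d\<in>dyadics. g d + x d)"

definition finsupp_D :: "(real \<Rightarrow> int) set" where
  "finsupp_D = {g. (\<forall>d. d \<notin> dyadics \<longrightarrow> g d = 0) \<and> finite {d\<in>dyadics. g d \<noteq> 0}}"

definition std_dyadic_partition :: "real list \<Rightarrow> bool" where
  "std_dyadic_partition ds \<longleftrightarrow> length ds \<ge> 2 \<and> sorted_wrt (<) ds \<and>
     ds ! 0 = 0 \<and> last ds = 1 \<and>
     (\<forall>j < length ds - 1. \<exists>(a::nat) (k::nat).
        ds ! j = real a / 2 ^ k \<and> ds ! (j + 1) = (real a + 1) / 2 ^ k)"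

definition Zfr :: "(real \<Rightarrow> int) set" where
  "Zfr = {g. (\<forall>d. d \<notin> dyadics \<longrightarrow> g d = 0) \<and>
            (\<exists>ds. std_dyadic_partition ds \<and>
               (\<forall>j < length ds - 1. \<exists>c. \<forall>d\<in>dyadics.
                   ds ! j \<le> d \<and> d < ds ! (j + 1) \<longrightarrow> g d = c))}"

definition nonsingular_aut :: "'a measure \<Rightarrow> ('a \<Rightarrow> 'a) \<Rightarrow> bool" where
  "nonsingular_aut M T \<longleftrightarrow> T \<in> M \<rightarrow>\<^sub>M M \<and>
     (\<exists>S \<in> M \<rightarrow>\<^sub>M M. \<forall>x\<in>space M. S (T x) = x \<and> T (S x) = x) \<and>
     absolutely_continuous M (distr M M T) \<and> absolutely_continuous (distr M M T) M"

definition weak_conv :: "'a measure \<Rightarrow> (nat \<Rightarrow> 'a \<Rightarrow> 'a) \<Rightarrow> ('a \<Rightarrow> 'a) \<Rightarrow> bool" where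
  "weak_conv M Ts T \<longleftrightarrow>
     (\<lambda>n. \<integral>\<^sup>+ x. ennreal \<bar>enn2real (RN_deriv M (distr M M (Ts n)) x)
                        - enn2real (RN_deriv M (distr M M T) x)\<bar> \<partial>M) \<longlonglongrightarrow> 0 \<and>
     (\<forall>A\<in>sets M. (\<lambda>n. measure M (((T -` A \<inter> space M) - (Ts n -` A \<inter> space M)) \<union>
                                    ((Ts n -` A \<inter> space M) - (T -` A \<inter> space M)))) \<longlonglongrightarrow> 0)"

end

theory Submission
  imports Defs
begin

text \<open>
  The approximants of a finitely supported \<open>g\<close> are the step functions \<open>g_m\<close> that spread each
  value \<open>g s\<close> over the dyadic interval \<open>[s, s + 2^-m)\<close>. They lie in \<open>Zfr\<close>, are bounded by
  \<open>\<Sum>s. |g s|\<close>, and at every point they eventually agree with \<open>g\<close>; so \<open>g_m - g\<close> is bounded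
  and vanishes on any given finite set once \<open>m\<close> is large.

  Translating one coordinate, distributed as \<open>mb b\<close>, by \<open>c\<close> moves the measure by at most
  \<open>4 |c| min 1 (sqrt b)\<close> in total variation: the unit translate differs from \<open>mb b\<close> by the
  telescoping sum \<open>2 / Zb b \<le> 4 sqrt b\<close>. Since \<open>min 1 (sqrt (\<beta> d)) \<le> \<beta> d powr p\<close> is
  summable, bounded translations vanishing on a large finite set are uniformly close to the
  identity in total variation; this is first shown on cylinder sets and then extended to all
  measurable sets by approximating them with cylinders. Closeness in total variation bounds the
  L1 distance of the Radon-Nikodym derivatives, and, since a translation vanishing on the base
  of a cylinder fixes it, also the measure of \<open>B \<Delta> shift (g_m - g) -` B\<close>.
\<close>

section \<open>Measure-theoretic preliminaries\<close>

lemma nn_integral_count_space_eq_infsum: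
  fixes f :: "'a \<Rightarrow> real"
  assumes "f summable_on A" "\<And>x. x \<in> A \<Longrightarrow> 0 \<le> f x"
  shows "(\<integral>\<^sup>+ x. ennreal (f x) \<partial>count_space A) = ennreal (infsum f A)"
proof -
  have "Infinite_Set_Sum.abs_summable_on f A"
    using assms(1) summable_on_iff_abs_summable_on_real abs_summable_equivalent by blast
  then show ?thesis
    using nn_integral_conv_infsetsum assms(2) infsetsum_infsum by metis
qed

lemma nn_integral_int_translate:
  "(\<integral>\<^sup>+ k. f (k + c) \<partial>count_space (UNIV::int set)) = (\<integral>\<^sup>+ k. f k \<partial>count_space UNIV)"
  by (rule nn_integral_bij_count_space) (rule bij_betwI[where g="\<lambda>k. k - c"], auto)

lemma tendsto_zero_ennreal_le:
  fixes X :: "nat \<Rightarrow> ennreal"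
  assumes "\<And>\<epsilon>::real. 0 < \<epsilon> \<Longrightarrow> eventually (\<lambda>n. X n \<le> ennreal \<epsilon>) sequentially"
  shows "X \<longlonglongrightarrow> 0"
proof (rule tendsto_zero_ennreal)
  fix r :: real assume r: "0 < r"
  then have "ennreal (r / 2) < ennreal r" by (simp add: ennreal_lessI)
  with assms[of "r / 2"] r show "eventually (\<lambda>n. X n < ennreal r) sequentially"
    by (auto elim: eventually_mono)
qed

lemma eventually_inverse_power_2_le:
  assumes "0 < (\<delta>::real)"
  shows "eventually (\<lambda>n. 1 / 2 ^ (c + n) \<le> \<delta>) sequentially"
proof -
  obtain n0 where n0: "(1/2::real) ^ n0 < \<delta>" using real_arch_pow_inv[OF assms, of "1/2"] by auto
  show ?thesis unfolding eventually_sequentially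
  proof (intro exI allI impI)
    fix n assume "n0 \<le> n"
    then have "(1/2::real) ^ (c + n) \<le> (1/2) ^ n0" by (intro power_decreasing) auto
    then show "1 / 2 ^ (c + n) \<le> \<delta>" using n0 by (simp add: power_one_over)
  qed
qed

lemma nonneg_summable_on_small_tail:
  fixes f :: "'a \<Rightarrow> real"
  assumes "f summable_on A" "\<And>x. x \<in> A \<Longrightarrow> 0 \<le> f x" "0 < \<epsilon>"
  obtains F where "finite F" "F \<subseteq> A" "\<And>F'. finite F' \<Longrightarrow> F' \<subseteq> A - F \<Longrightarrow> sum f F' \<le> \<epsilon>"
proof -
  obtain F where F: "finite F" "F \<subseteq> A" "dist (sum f F) (infsum f A) \<le> \<epsilon>"
    using infsum_finite_approximation[OF assms(1,3)] by blast
  have "sum f F' \<le> \<epsilon>" if F': "finite F'" "F' \<subseteq> A - F" for F'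
  proof -
    have "infsum f (F \<union> F') \<le> infsum f A"
      using F F' assms by (intro infsum_mono_neutral) auto
    then have "sum f (F \<union> F') \<le> infsum f A"
      using F(1) F'(1) by simp
    moreover have "sum f (F \<union> F') = sum f F + sum f F'"
      using F(1) F' by (intro sum.union_disjoint) auto
    ultimately show ?thesis using F(3) by (simp add: dist_real_def)
  qed
  with F that show ?thesis by blast
qed

lemma (in finite_measure) eventually_measure_Diff_UN_lessThan_less:
  assumes "range A \<subseteq> sets M" "0 < e"
  shows "eventually (\<lambda>n. measure M (\<Union>(range A) - (\<Union>i<n. A i)) < e) sequentially"
proof -
  have UN_eq: "(\<Union>n. \<Union>i<n. A i) = \<Union>(range A)" by blast
  have "incseq (\<lambda>n. \<Union>i<n. A i)"
    unfolding incseq_def by (auto intro: less_le_trans)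
  then have "(\<lambda>n. measure M (\<Union>i<n. A i)) \<longlonglongrightarrow> measure M (\<Union>(range A))"
    using finite_Lim_measure_incseq[of "\<lambda>n. \<Union>i<n. A i"] assms(1) unfolding UN_eq by blast
  then have "eventually (\<lambda>n. measure M (\<Union>(range A)) - e < measure M (\<Union>i<n. A i)) sequentially"
    using assms(2) by (intro order_tendstoD(1)) auto
  then show ?thesis
  proof (rule eventually_mono)
    fix n assume "measure M (\<Union>(range A)) - e < measure M (\<Union>i<n. A i)"
    moreover have "measure M (\<Union>(range A) - (\<Union>i<n. A i)) = measure M (\<Union>(range A)) - measure M (\<Union>i<n. A i)"
      using assms(1) by (intro finite_measure_Diff) auto
    ultimately show "measure M (\<Union>(range A) - (\<Union>i<n. A i)) < e" by simp
  qed
qed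

lemma (in finite_measure) measure_symdiff_UN_less:
  fixes A C :: "nat \<Rightarrow> 'a set"
  assumes "range A \<subseteq> sets M" "range C \<subseteq> sets M"
    and tail: "measure M (\<Union>(range A) - (\<Union>i<n. A i)) < e / 2"
    and close: "\<And>i. measure M (sym_diff (A i) (C i)) < e / (2 * (real n + 1))"
  shows "measure M (sym_diff (\<Union>(range A)) (\<Union>i<n. C i)) < e"
proof -
  have sets: "sym_diff (A i) (C i) \<in> sets M" for i
    using assms by auto
  have UN_sets: "\<Union>(range A) \<in> sets M" "(\<Union>i<n. A i) \<in> sets M"
    "(\<Union>i<n. sym_diff (A i) (C i)) \<in> sets M"
    using assms sets by auto
  have "sym_diff (\<Union>(range A)) (\<Union>i<n. C i) \<subseteq> (\<Union>(range A) - (\<Union>i<n. A i)) \<union> (\<Union>i<n. sym_diff (A i) (C i))"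
    by blast
  then have "measure M (sym_diff (\<Union>(range A)) (\<Union>i<n. C i))
      \<le> measure M ((\<Union>(range A) - (\<Union>i<n. A i)) \<union> (\<Union>i<n. sym_diff (A i) (C i)))"
    by (rule finite_measure_mono) (use UN_sets in auto)
  also have "\<dots> \<le> measure M (\<Union>(range A) - (\<Union>i<n. A i)) + measure M (\<Union>i<n. sym_diff (A i) (C i))"
    using UN_sets by (intro measure_Un_le) auto
  also have "measure M (\<Union>i<n. sym_diff (A i) (C i)) \<le> (\<Sum>i<n. measure M (sym_diff (A i) (C i)))"
    using sets by (intro finite_measure_subadditive_finite) auto
  also have "\<dots> \<le> real n * (e / (2 * (real n + 1)))"
    using sum_mono[of "{..<n}", OF less_imp_le[OF close]] by simp
  also have "\<dots> \<le> e / 2"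
  proof -
    have "0 < e" using tail measure_nonneg[of M "\<Union>(range A) - (\<Union>i<n. A i)"] by linarith
    then show ?thesis by (simp add: field_simps)
  qed
  finally show ?thesis using tail by simp
qed

lemma sigma_sets_approx_by_algebra:
  assumes "algebra \<Omega> G"
    and fP: "finite_measure P" and sP: "sets P = sigma_sets \<Omega> G"
    and fQ: "finite_measure Q" and sQ: "sets Q = sigma_sets \<Omega> G"
    and "B \<in> sigma_sets \<Omega> G" "0 < e"
  shows "\<exists>C\<in>G. measure P (sym_diff B C) < e \<and> measure Q (sym_diff B C) < e"
  using assms(6,7)
proof (induction B arbitrary: e rule: sigma_sets.induct)
  case (Basic a)
  then show ?case by (intro bexI[of _ a]) auto
next
  case Empty
  interpret algebra \<Omega> G by fact
  from Empty show ?case by (intro bexI[of _ "{}"]) auto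
next
  case (Compl a)
  interpret algebra \<Omega> G by fact
  obtain C where C: "C \<in> G" "measure P (sym_diff a C) < e" "measure Q (sym_diff a C) < e"
    using Compl.IH Compl.prems by blast
  have "sym_diff (\<Omega> - a) (\<Omega> - C) = sym_diff a C"
    using sigma_sets_into_sp[OF space_closed Compl.hyps] C(1) space_closed by auto
  with C show ?case by (intro bexI[of _ "\<Omega> - C"]) auto
next
  case (Union A)
  interpret algebra \<Omega> G by fact
  have A: "range A \<subseteq> sets P" "range A \<subseteq> sets Q" using Union.hyps sP sQ by auto
  have "eventually (\<lambda>n. measure P (\<Union>(range A) - (\<Union>i<n. A i)) < e / 2
      \<and> measure Q (\<Union>(range A) - (\<Union>i<n. A i)) < e / 2) sequentially"
    using Union.prems by (intro eventually_conj finite_measure.eventually_measure_Diff_UN_lessThan_less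
        fP fQ A) auto
  then obtain n where n: "measure P (\<Union>(range A) - (\<Union>i<n. A i)) < e / 2"
    "measure Q (\<Union>(range A) - (\<Union>i<n. A i)) < e / 2"
    by (metis (no_types, lifting) eventually_sequentially order_refl)
  have "0 < e / (2 * (real n + 1))" using Union.prems by simp
  then obtain C where C: "\<And>i. C i \<in> G" "\<And>i. measure P (sym_diff (A i) (C i)) < e / (2 * (real n + 1))"
    "\<And>i. measure Q (sym_diff (A i) (C i)) < e / (2 * (real n + 1))"
    using Union.IH by metis
  have "range C \<subseteq> sets P" "range C \<subseteq> sets Q"
    using C(1) sP sQ by auto
  moreover have "(\<Union>i<n. C i) \<in> G" using C(1) by (intro finite_UN) auto
  ultimately show ?case
    using finite_measure.measure_symdiff_UN_less[OF fP A(1) _ n(1) C(2)]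
      finite_measure.measure_symdiff_UN_less[OF fQ A(2) _ n(2) C(3)] by blast
qed

lemma nn_integral_pos_part_le_of_setwise_le:
  fixes u v :: "'a \<Rightarrow> real"
  assumes [measurable]: "u \<in> borel_measurable M" "v \<in> borel_measurable M"
    and v_nonneg: "\<And>x. 0 \<le> v x" and v_finite: "(\<integral>\<^sup>+ x. ennreal (v x) \<partial>M) \<noteq> \<infinity>"
    and le: "\<And>B. B \<in> sets M \<Longrightarrow>
      (\<integral>\<^sup>+ x. ennreal (u x) * indicator B x \<partial>M) \<le> (\<integral>\<^sup>+ x. ennreal (v x) * indicator B x \<partial>M) + e"
  shows "(\<integral>\<^sup>+ x. ennreal (u x - v x) * indicator {x \<in> space M. v x \<le> u x} x \<partial>M) \<le> e"
proof -
  define E where "E = {x \<in> space M. v x \<le> u x}"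
  have [measurable]: "E \<in> sets M" unfolding E_def by measurable
  have "(\<integral>\<^sup>+ x. ennreal (u x) * indicator E x \<partial>M)
      = (\<integral>\<^sup>+ x. ennreal (v x) * indicator E x + ennreal (u x - v x) * indicator E x \<partial>M)"
    using v_nonneg by (intro nn_integral_cong)
      (auto simp: E_def indicator_def ennreal_plus[symmetric] simp del: ennreal_plus)
  also have "\<dots> = (\<integral>\<^sup>+ x. ennreal (v x) * indicator E x \<partial>M)
      + (\<integral>\<^sup>+ x. ennreal (u x - v x) * indicator E x \<partial>M)"
    by (rule nn_integral_add) auto
  finally have "(\<integral>\<^sup>+ x. ennreal (v x) * indicator E x \<partial>M) + (\<integral>\<^sup>+ x. ennreal (u x - v x) * indicator E x \<partial>M)
      \<le> (\<integral>\<^sup>+ x. ennreal (v x) * indicator E x \<partial>M) + e"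
    using le[of E] by simp
  moreover have "(\<integral>\<^sup>+ x. ennreal (v x) * indicator E x \<partial>M) \<le> (\<integral>\<^sup>+ x. ennreal (v x) \<partial>M)"
    by (intro nn_integral_mono) (simp add: indicator_def)
  then have "(\<integral>\<^sup>+ x. ennreal (v x) * indicator E x \<partial>M) \<noteq> \<infinity>"
    using v_finite by (auto simp: top_unique)
  ultimately show ?thesis unfolding E_def by (simp add: ennreal_add_left_cancel_le)
qed

lemma nn_integral_abs_diff_le_of_setwise_le:
  fixes u v :: "'a \<Rightarrow> real"
  assumes [measurable]: "u \<in> borel_measurable M" "v \<in> borel_measurable M"
    and "\<And>x. 0 \<le> u x" "\<And>x. 0 \<le> v x"
    and "(\<integral>\<^sup>+ x. ennreal (u x) \<partial>M) \<noteq> \<infinity>" "(\<integral>\<^sup>+ x. ennreal (v x) \<partial>M) \<noteq> \<infinity>"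
    and "\<And>B. B \<in> sets M \<Longrightarrow>
      (\<integral>\<^sup>+ x. ennreal (u x) * indicator B x \<partial>M) \<le> (\<integral>\<^sup>+ x. ennreal (v x) * indicator B x \<partial>M) + e"
    and "\<And>B. B \<in> sets M \<Longrightarrow>
      (\<integral>\<^sup>+ x. ennreal (v x) * indicator B x \<partial>M) \<le> (\<integral>\<^sup>+ x. ennreal (u x) * indicator B x \<partial>M) + e"
  shows "(\<integral>\<^sup>+ x. ennreal \<bar>u x - v x\<bar> \<partial>M) \<le> 2 * e"
proof -
  have "(\<integral>\<^sup>+ x. ennreal \<bar>u x - v x\<bar> \<partial>M)
      = (\<integral>\<^sup>+ x. ennreal (u x - v x) * indicator {x \<in> space M. v x \<le> u x} x
             + ennreal (v x - u x) * indicator {x \<in> space M. u x \<le> v x} x \<partial>M)"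
    by (intro nn_integral_cong) (auto simp: indicator_def abs_if ennreal_neg)
  also have "\<dots> = (\<integral>\<^sup>+ x. ennreal (u x - v x) * indicator {x \<in> space M. v x \<le> u x} x \<partial>M)
      + (\<integral>\<^sup>+ x. ennreal (v x - u x) * indicator {x \<in> space M. u x \<le> v x} x \<partial>M)"
    by (rule nn_integral_add) auto
  also have "\<dots> \<le> e + e"
    using assms by (intro add_mono nn_integral_pos_part_le_of_setwise_le) auto
  finally show ?thesis by (simp add: mult_2)
qed

lemma (in sigma_finite_measure) emeasure_eq_nn_integral_enn2real_RN_deriv:
  assumes "finite_measure N" "sets N = sets M" "absolutely_continuous M N" "B \<in> sets M"
  shows "emeasure N B = (\<integral>\<^sup>+ x. ennreal (enn2real (RN_deriv M N x)) * indicator B x \<partial>M)"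
proof -
  have "emeasure N B = (\<integral>\<^sup>+ x. RN_deriv M N x * indicator B x \<partial>M)"
    using density_RN_deriv[OF assms(3,2)] assms(4) emeasure_density[of "RN_deriv M N" M B] by simp
  also have "\<dots> = (\<integral>\<^sup>+ x. ennreal (enn2real (RN_deriv M N x)) * indicator B x \<partial>M)"
    using RN_deriv_finite[of N] assms(1-3)
    by (intro nn_integral_cong_AE) (auto simp: finite_measure_def ennreal_enn2real_if)
  finally show ?thesis .
qed

lemma (in sigma_finite_measure) RN_deriv_L1_dist_le:
  assumes Q1: "finite_measure Q1" "sets Q1 = sets M" "absolutely_continuous M Q1"
    and Q2: "finite_measure Q2" "sets Q2 = sets M" "absolutely_continuous M Q2"
    and "\<And>B. B \<in> sets M \<Longrightarrow> emeasure Q1 B \<le> emeasure Q2 B + e"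
    and "\<And>B. B \<in> sets M \<Longrightarrow> emeasure Q2 B \<le> emeasure Q1 B + e"
  shows "(\<integral>\<^sup>+ x. ennreal \<bar>enn2real (RN_deriv M Q1 x) - enn2real (RN_deriv M Q2 x)\<bar> \<partial>M) \<le> 2 * e"
proof (rule nn_integral_abs_diff_le_of_setwise_le)
  have finite: "(\<integral>\<^sup>+ x. ennreal (enn2real (RN_deriv M Q x)) \<partial>M) \<noteq> \<infinity>"
    if "finite_measure Q" "sets Q = sets M" "absolutely_continuous M Q" for Q
    using emeasure_eq_nn_integral_enn2real_RN_deriv[OF that sets.top]
      finite_measure.emeasure_finite[OF that(1), of "space M"]
    by (simp cong: nn_integral_cong_simp)
  show "(\<integral>\<^sup>+ x. ennreal (enn2real (RN_deriv M Q1 x)) \<partial>M) \<noteq> \<infinity>"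
    by (rule finite[OF Q1])
  show "(\<integral>\<^sup>+ x. ennreal (enn2real (RN_deriv M Q2 x)) \<partial>M) \<noteq> \<infinity>"
    by (rule finite[OF Q2])
qed (use assms in \<open>simp_all add: emeasure_eq_nn_integral_enn2real_RN_deriv[symmetric]\<close>)

lemma emeasure_le_of_approximations:
  assumes "B' \<subseteq> C' \<union> S'" "C \<subseteq> B \<union> S"
    and "B \<in> sets M" "S \<in> sets M" "C' \<in> sets M" "S' \<in> sets M"
    and "emeasure M C' \<le> emeasure M C + e"
  shows "emeasure M B' \<le> emeasure M B + e + (emeasure M S + emeasure M S')"
proof -
  have "emeasure M B' \<le> emeasure M C' + emeasure M S'"
    using assms by (intro order_trans[OF emeasure_mono[OF assms(1)]] emeasure_subadditive) auto
  moreover have "emeasure M C \<le> emeasure M B + emeasure M S"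
    using assms by (intro order_trans[OF emeasure_mono[OF assms(2)]] emeasure_subadditive) auto
  ultimately have "emeasure M B' \<le> emeasure M B + emeasure M S + e + emeasure M S'"
    using assms(7) by (meson add_right_mono order_trans)
  then show ?thesis
    by (simp add: ac_simps)
qed

section \<open>The discrete Gaussian measures\<close>

definition gauss_weight :: "real \<Rightarrow> int \<Rightarrow> real" where
  "gauss_weight b k = exp (- (real_of_int k ^ 2) * b / 2)"

definition mb_mass :: "real \<Rightarrow> int \<Rightarrow> real" where
  "mb_mass b k = gauss_weight b k / Zb b"

lemma gauss_weight_pos: "0 < gauss_weight b k"
  by (simp add: gauss_weight_def)

lemma gauss_weight_minus: "gauss_weight b (- k) = gauss_weight b k"
  by (simp add: gauss_weight_def)

lemma gauss_weight_Suc_le: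
  assumes "0 < b" "0 \<le> k"
  shows "gauss_weight b (k + 1) \<le> gauss_weight b k"
proof -
  have "real_of_int k ^ 2 \<le> real_of_int (k + 1) ^ 2"
    using assms(2) by (simp add: power2_eq_square algebra_simps)
  then show ?thesis
    using assms(1) by (simp add: gauss_weight_def mult_right_mono)
qed

lemma gauss_weight_summable_on:
  assumes "0 < b"
  shows "gauss_weight b summable_on UNIV"
proof -
  have "summable (\<lambda>n::nat. gauss_weight b (int n))"
  proof (rule summable_comparison_test)
    show "summable (\<lambda>n. exp (- b / 2) ^ n)"
      using assms by (intro summable_geometric) simp
    have "gauss_weight b (int n) \<le> exp (- b / 2) ^ n" for n
    proof -
      have "real n * b \<le> real n ^ 2 * b"
        using assms by (intro mult_right_mono) (cases n, auto simp: power2_eq_square)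
      then have "gauss_weight b (int n) \<le> exp (real n * (- b / 2))"
        by (simp add: gauss_weight_def)
      also have "\<dots> = exp (- b / 2) ^ n"
        by (rule exp_of_nat_mult)
      finally show ?thesis .
    qed
    then show "\<exists>N. \<forall>n\<ge>N. norm (gauss_weight b (int n)) \<le> exp (- b / 2) ^ n"
      using gauss_weight_pos by (simp add: less_imp_le)
  qed
  then have nat: "(\<lambda>n::nat. gauss_weight b (int n)) summable_on UNIV"
    using summable_on_UNIV_nonneg_real_iff gauss_weight_pos less_imp_le by metis
  have "gauss_weight b summable_on range int"
    using nat by (subst summable_on_reindex) (auto simp: o_def)
  moreover have "gauss_weight b summable_on range (\<lambda>n. - int n)"
    using nat by (subst summable_on_reindex) (auto simp: o_def gauss_weight_minus inj_on_def)
  moreover have "UNIV = range int \<union> range (\<lambda>n. - int n)"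
    by (auto intro: int_cases2)
  ultimately show ?thesis by (metis summable_on_union)
qed

lemma Zb_eq_infsum: "Zb b = infsum (gauss_weight b) UNIV"
  by (simp add: Zb_def gauss_weight_def[abs_def])

lemma nn_integral_gauss_weight:
  assumes "0 < b"
  shows "(\<integral>\<^sup>+ k. ennreal (gauss_weight b k) \<partial>count_space UNIV) = ennreal (Zb b)"
  using nn_integral_count_space_eq_infsum[OF gauss_weight_summable_on[OF assms]] gauss_weight_pos
  by (simp add: Zb_eq_infsum less_imp_le)

lemma sum_gauss_weight_le_Zb:
  assumes "0 < b" "finite F"
  shows "(\<Sum>k\<in>F. gauss_weight b k) \<le> Zb b"
proof -
  have "(\<Sum>k\<in>F. gauss_weight b k) = infsum (gauss_weight b) F"
    using assms(2) by simp
  also have "\<dots> \<le> infsum (gauss_weight b) UNIV"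
    using gauss_weight_summable_on[OF assms(1)] assms(2) gauss_weight_pos
    by (intro infsum_mono_neutral) (auto simp: less_imp_le)
  finally show ?thesis by (simp add: Zb_eq_infsum)
qed

lemma Zb_ge_1: "0 < b \<Longrightarrow> 1 \<le> Zb b"
  using sum_gauss_weight_le_Zb[of b "{0}"] by (simp add: gauss_weight_def)

lemma Zb_pos: "0 < b \<Longrightarrow> 0 < Zb b"
  using Zb_ge_1[of b] by simp

text \<open>The weights \<open>gauss_weight b k\<close> with \<open>0 \<le> k \<le> 1/\<surd>b\<close> are all at least \<open>exp (-1/2)\<close>,
  and there are more than \<open>1/\<surd>b\<close> of them.\<close>
lemma inverse_Zb_le_sqrt:
  assumes "0 < b"
  shows "1 / Zb b \<le> 2 * sqrt b"
proof -
  define N where "N = nat \<lfloor>1 / sqrt b\<rfloor>"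
  have sb: "0 < sqrt b" using assms by simp
  have N: "1 / sqrt b < real N + 1" "real N \<le> 1 / sqrt b"
    using sb floor_correct[of "1 / sqrt b"] by (auto simp: N_def)
  have lower: "exp (- 1 / 2) \<le> gauss_weight b (int k)" if "k \<le> N" for k
  proof -
    have "real k \<le> 1 / sqrt b" using that N(2) by (meson of_nat_le_iff order_trans)
    then have "real k * sqrt b \<le> 1" using sb by (simp add: field_simps)
    then have "(real k * sqrt b) ^ 2 \<le> 1" using sb by (simp add: power_le_one)
    then show ?thesis using assms by (simp add: gauss_weight_def power_mult_distrib)
  qed
  have "real (N + 1) * exp (- 1 / 2) = (\<Sum>k\<le>N. exp (- 1 / 2 :: real))"
    by simp
  also have "\<dots> \<le> (\<Sum>k\<le>N. gauss_weight b (int k))"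
    using lower by (intro sum_mono) auto
  also have "\<dots> = (\<Sum>k\<in>int ` {..N}. gauss_weight b k)" by (simp add: sum.reindex)
  also have "\<dots> \<le> Zb b" by (rule sum_gauss_weight_le_Zb[OF assms]) simp
  finally have "1 / sqrt b * exp (- 1 / 2) \<le> Zb b"
    using N(1) order_trans[OF mult_right_mono[of "1 / sqrt b" "real (N + 1)" "exp (- 1 / 2)"]] by simp
  then have "1 \<le> Zb b * sqrt b * exp (1 / 2)"
    using sb by (simp add: field_simps exp_minus)
  also have "exp (1 / 2 :: real) \<le> 2"
  proof (rule power2_le_imp_le)
    show "exp (1 / 2 :: real) ^ 2 \<le> 2 ^ 2"
      using exp_le by (simp add: exp_of_nat_mult[symmetric])
  qed simp
  then have "Zb b * sqrt b * exp (1 / 2) \<le> Zb b * sqrt b * 2"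
    using sb Zb_pos[OF assms] by (intro mult_left_mono) auto
  finally show ?thesis using Zb_pos[OF assms] sb by (simp add: field_simps)
qed

lemma mb_eq_point_measure: "mb b = point_measure UNIV (\<lambda>k. ennreal (mb_mass b k))"
  by (simp add: mb_def mb_mass_def gauss_weight_def)

lemma sets_mb [simp]: "sets (mb b) = UNIV"
  by (simp add: mb_eq_point_measure sets_point_measure)

lemma space_mb [simp]: "space (mb b) = UNIV"
  by (simp add: mb_eq_point_measure space_point_measure)

lemma measurable_mb [simp]: "f \<in> measurable (mb b) N \<longleftrightarrow> f \<in> UNIV \<rightarrow> space N"
  by (simp add: mb_eq_point_measure)

lemma nn_integral_mb:
  "integral\<^sup>N (mb b) f = (\<integral>\<^sup>+ k. ennreal (mb_mass b k) * f k \<partial>count_space UNIV)"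
  unfolding mb_eq_point_measure point_measure_def by (subst nn_integral_density) auto

lemma emeasure_mb:
  "emeasure (mb b) A = (\<integral>\<^sup>+ k. ennreal (mb_mass b k) * indicator A k \<partial>count_space UNIV)"
  unfolding mb_eq_point_measure point_measure_def by (simp add: emeasure_density)

lemma mb_mass_pos: "0 < b \<Longrightarrow> 0 < mb_mass b k"
  using gauss_weight_pos Zb_pos by (simp add: mb_mass_def)

lemma mb_mass_minus: "mb_mass b (- k) = mb_mass b k"
  by (simp add: mb_mass_def gauss_weight_minus)

lemma mb_mass_Suc_le: "0 < b \<Longrightarrow> 0 \<le> k \<Longrightarrow> mb_mass b (k + 1) \<le> mb_mass b k"
  using gauss_weight_Suc_le Zb_pos by (simp add: mb_mass_def divide_right_mono less_imp_le)

lemma nn_integral_mb_mass: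
  assumes "0 < b"
  shows "(\<integral>\<^sup>+ k. ennreal (mb_mass b k) \<partial>count_space UNIV) = 1"
proof -
  have "(\<integral>\<^sup>+ k. ennreal (mb_mass b k) \<partial>count_space UNIV)
      = (\<integral>\<^sup>+ k. ennreal (gauss_weight b k) * ennreal (1 / Zb b) \<partial>count_space UNIV)"
    using Zb_pos[OF assms] gauss_weight_pos[of b]
    by (intro nn_integral_cong) (simp add: mb_mass_def ennreal_mult[symmetric] less_imp_le)
  also have "\<dots> = 1"
    using Zb_pos[OF assms]
    by (simp add: nn_integral_multc nn_integral_gauss_weight[OF assms] ennreal_mult[symmetric])
  finally show ?thesis .
qed

lemma prob_space_mb: "0 < b \<Longrightarrow> prob_space (mb b)"
  by (rule prob_spaceI) (simp add: emeasure_mb nn_integral_mb_mass)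

lemma nn_integral_mb_mass_ratio:
  assumes "0 < b"
  shows "(\<integral>\<^sup>+ k. indicator A k * ennreal (mb_mass b (k - c) / mb_mass b k) \<partial>mb b)
    = emeasure (mb b) ((\<lambda>k. k + c) -` A)"
proof -
  have "(\<integral>\<^sup>+ k. indicator A k * ennreal (mb_mass b (k - c) / mb_mass b k) \<partial>mb b)
      = (\<integral>\<^sup>+ k. ennreal (mb_mass b (k - c)) * indicator A k \<partial>count_space UNIV)"
    unfolding nn_integral_mb using mb_mass_pos[OF assms] less_imp_neq[OF mb_mass_pos[OF assms]]
    by (intro nn_integral_cong) (simp add: ennreal_mult[symmetric] mult_ac less_imp_le)
  also have "\<dots> = (\<integral>\<^sup>+ k. ennreal (mb_mass b k) * indicator A (k + c) \<partial>count_space UNIV)"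
    using nn_integral_int_translate[of "\<lambda>k. ennreal (mb_mass b k) * indicator A (k + c)" "- c"] by simp
  finally show ?thesis
    by (simp add: emeasure_mb indicator_def)
qed

definition mb_transl_dist :: "real \<Rightarrow> int \<Rightarrow> ennreal" where
  "mb_transl_dist b c = (\<integral>\<^sup>+ k. ennreal \<bar>mb_mass b (k - c) - mb_mass b k\<bar> \<partial>count_space UNIV)"

lemma mb_transl_dist_0 [simp]: "mb_transl_dist b 0 = 0"
  by (simp add: mb_transl_dist_def)

lemma mb_transl_dist_uminus: "mb_transl_dist b (- c) = mb_transl_dist b c"
proof -
  have "mb_transl_dist b (- c)
      = (\<integral>\<^sup>+ k. ennreal \<bar>mb_mass b ((k - c) + c) - mb_mass b (k - c)\<bar> \<partial>count_space UNIV)"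
    unfolding mb_transl_dist_def
    using nn_integral_int_translate[of "\<lambda>k. ennreal \<bar>mb_mass b (k + c) - mb_mass b k\<bar>" "- c"] by simp
  also have "\<dots> = mb_transl_dist b c"
    unfolding mb_transl_dist_def by (intro nn_integral_cong) (simp add: abs_minus_commute)
  finally show ?thesis .
qed

lemma mb_transl_dist_add_le: "mb_transl_dist b (c + d) \<le> mb_transl_dist b c + mb_transl_dist b d"
proof -
  have "mb_transl_dist b (c + d) \<le> (\<integral>\<^sup>+ k. ennreal \<bar>mb_mass b (k - d - c) - mb_mass b (k - d)\<bar>
      + ennreal \<bar>mb_mass b (k - d) - mb_mass b k\<bar> \<partial>count_space UNIV)"
    unfolding mb_transl_dist_def
    by (intro nn_integral_mono) (simp add: ennreal_plus[symmetric] algebra_simps del: ennreal_plus)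
  also have "\<dots> = (\<integral>\<^sup>+ k. ennreal \<bar>mb_mass b (k - d - c) - mb_mass b (k - d)\<bar> \<partial>count_space UNIV)
      + mb_transl_dist b d"
    unfolding mb_transl_dist_def by (rule nn_integral_add) auto
  also have "(\<integral>\<^sup>+ k. ennreal \<bar>mb_mass b (k - d - c) - mb_mass b (k - d)\<bar> \<partial>count_space UNIV)
      = mb_transl_dist b c"
    unfolding mb_transl_dist_def
    using nn_integral_int_translate[of "\<lambda>k. ennreal \<bar>mb_mass b (k - c) - mb_mass b k\<bar>" "- d"] by simp
  finally show ?thesis .
qed

lemma mb_transl_dist_le_2:
  assumes "0 < b"
  shows "mb_transl_dist b c \<le> 2"
proof -
  have "mb_transl_dist b c
      \<le> (\<integral>\<^sup>+ k. ennreal (mb_mass b (k - c)) + ennreal (mb_mass b k) \<partial>count_space UNIV)"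
  proof (unfold mb_transl_dist_def, intro nn_integral_mono)
    fix k
    have "0 < mb_mass b (k - c)" "0 < mb_mass b k" using mb_mass_pos[OF assms] by auto
    then show "ennreal \<bar>mb_mass b (k - c) - mb_mass b k\<bar> \<le> ennreal (mb_mass b (k - c)) + ennreal (mb_mass b k)"
      by (simp add: ennreal_plus[symmetric] del: ennreal_plus)
  qed
  also have "\<dots> = (\<integral>\<^sup>+ k. ennreal (mb_mass b (k - c)) \<partial>count_space UNIV)
      + (\<integral>\<^sup>+ k. ennreal (mb_mass b k) \<partial>count_space UNIV)"
    by (rule nn_integral_add) auto
  also have "\<dots> = 2"
    using nn_integral_int_translate[of "\<lambda>k. ennreal (mb_mass b k)" "- c"] nn_integral_mb_mass[OF assms]
    by simp
  finally show ?thesis .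
qed

lemma nn_integral_mb_mass_decrements_le:
  assumes "0 < b"
  shows "(\<integral>\<^sup>+ n. ennreal (mb_mass b (int n) - mb_mass b (int n + 1)) \<partial>count_space UNIV)
    \<le> ennreal (mb_mass b 0)"
proof -
  define a where "a n = mb_mass b (int n)" for n
  define d where "d n = a n - a (Suc n)" for n
  have d_nonneg: "0 \<le> d n" for n
    using mb_mass_Suc_le[OF assms, of "int n"] by (simp add: d_def a_def add.commute)
  have "sum d {..<N} = a 0 - a N" for N
    unfolding d_def by (rule sum_lessThan_telescope')
  then have partial_sums_le: "sum d {..<N} \<le> mb_mass b 0" for N
    using mb_mass_pos[OF assms, of "int N"] by (simp add: a_def)
  have d_summable: "summable d"
    using d_nonneg partial_sums_le by (rule summableI_nonneg_bounded)
  have "(\<integral>\<^sup>+ n. ennreal (d n) \<partial>count_space UNIV) = ennreal (suminf d)"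
    by (simp add: nn_integral_count_space_nat suminf_ennreal2 d_nonneg d_summable)
  also have "\<dots> \<le> ennreal (mb_mass b 0)"
    using d_summable partial_sums_le by (intro ennreal_leI suminf_le_const)
  finally show ?thesis by (simp add: d_def a_def add.commute)
qed

text \<open>The mass function is even and decreasing on \<open>k \<ge> 0\<close>, so both tails contribute the
  same telescoping series.\<close>
lemma mb_transl_dist_1_eq:
  assumes "0 < b"
  shows "mb_transl_dist b 1
    = 2 * (\<integral>\<^sup>+ n. ennreal (mb_mass b (int n) - mb_mass b (int n + 1)) \<partial>count_space UNIV)"
proof -
  define F where "F k = ennreal \<bar>mb_mass b (k - 1) - mb_mass b k\<bar>" for k
  have F_pos: "F (int n + 1) = ennreal (mb_mass b (int n) - mb_mass b (int n + 1))" for n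
    using mb_mass_Suc_le[OF assms, of "int n"] by (simp add: F_def)
  have F_neg: "F (- int n) = F (int n + 1)" for n
    using mb_mass_minus[of b "int n + 1"] by (simp add: F_def mb_mass_minus abs_minus_commute)
  have "mb_transl_dist b 1 = (\<integral>\<^sup>+ k. F k * indicator {1..} k + F k * indicator {..0} k \<partial>count_space UNIV)"
    unfolding mb_transl_dist_def F_def by (intro nn_integral_cong) (auto simp: indicator_def)
  also have "\<dots> = (\<integral>\<^sup>+ k. F k \<partial>count_space {1..}) + (\<integral>\<^sup>+ k. F k \<partial>count_space {..0})"
    by (simp add: nn_integral_add nn_integral_count_space_indicator)
  also have "(\<integral>\<^sup>+ k. F k \<partial>count_space {1..}) = (\<integral>\<^sup>+ n. F (int n + 1) \<partial>count_space UNIV)"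
    by (rule nn_integral_bij_count_space[symmetric]) (rule bij_betwI[where g="\<lambda>k. nat (k - 1)"], auto)
  also have "(\<integral>\<^sup>+ k. F k \<partial>count_space {..0}) = (\<integral>\<^sup>+ n. F (- int n) \<partial>count_space UNIV)"
    by (rule nn_integral_bij_count_space[symmetric]) (rule bij_betwI[where g="\<lambda>k. nat (- k)"], auto)
  finally show ?thesis by (simp add: F_neg F_pos mult_2)
qed

lemma mb_transl_dist_1_le:
  assumes "0 < b"
  shows "mb_transl_dist b 1 \<le> ennreal (2 / Zb b)"
proof -
  have "mb_transl_dist b 1 \<le> 2 * ennreal (mb_mass b 0)"
    unfolding mb_transl_dist_1_eq[OF assms]
    by (intro mult_left_mono nn_integral_mb_mass_decrements_le[OF assms]) simp
  also have "\<dots> = ennreal (2 / Zb b)"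
    using mb_mass_pos[OF assms, of 0]
    by (simp add: mb_mass_def gauss_weight_def mult_2 ennreal_plus[symmetric] del: ennreal_plus)
  finally show ?thesis .
qed

lemma mb_transl_dist_of_nat_le: "mb_transl_dist b (int n) \<le> of_nat n * mb_transl_dist b 1"
proof (induction n)
  case (Suc n)
  have "mb_transl_dist b (int (Suc n)) \<le> mb_transl_dist b (int n) + mb_transl_dist b 1"
    using mb_transl_dist_add_le[of b "int n" 1] by (simp add: add.commute)
  also have "\<dots> \<le> of_nat (Suc n) * mb_transl_dist b 1"
    using Suc by (simp add: distrib_right add_right_mono)
  finally show ?case .
qed simp

lemma mb_transl_dist_le_abs_mult: "mb_transl_dist b c \<le> of_nat (nat \<bar>c\<bar>) * mb_transl_dist b 1"
proof (cases "0 \<le> c")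
  case True
  then show ?thesis using mb_transl_dist_of_nat_le[of b "nat c"] by simp
next
  case False
  then show ?thesis
    using mb_transl_dist_of_nat_le[of b "nat (- c)"] mb_transl_dist_uminus[of b c] by simp
qed

lemma mb_transl_dist_le:
  assumes "0 < b"
  shows "mb_transl_dist b c \<le> ennreal (4 * \<bar>real_of_int c\<bar> * min 1 (sqrt b))"
proof (cases "c = 0")
  case False
  then have c: "1 \<le> \<bar>real_of_int c\<bar>" by linarith
  have "mb_transl_dist b c \<le> of_nat (nat \<bar>c\<bar>) * ennreal (2 / Zb b)"
    using mb_transl_dist_le_abs_mult[of b c] mb_transl_dist_1_le[OF assms]
    by (meson mult_left_mono order_trans zero_le)
  also have "\<dots> = ennreal (\<bar>real_of_int c\<bar> * (2 / Zb b))"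
    using Zb_pos[OF assms] by (simp add: ennreal_of_nat_eq_real_of_nat ennreal_mult[symmetric])
  also have "\<dots> \<le> ennreal (\<bar>real_of_int c\<bar> * (2 * (2 * sqrt b)))"
    using inverse_Zb_le_sqrt[OF assms] by (intro ennreal_leI mult_left_mono) auto
  finally have sqrt: "mb_transl_dist b c \<le> ennreal (4 * \<bar>real_of_int c\<bar> * sqrt b)"
    by (simp add: mult_ac)
  have "mb_transl_dist b c \<le> ennreal (4 * \<bar>real_of_int c\<bar>)"
    using mb_transl_dist_le_2[OF assms, of c] c
    by (auto intro: order_trans simp: ennreal_numeral[symmetric] simp del: ennreal_numeral)
  with sqrt show ?thesis
    by (cases "sqrt b \<le> 1") (auto simp: min_def)
qed simp

section \<open>Translations of the product measure\<close>

locale gaussian_product =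
  fixes \<beta> :: "real \<Rightarrow> real"
  assumes beta_pos: "\<forall>d\<in>dyadics. 0 < \<beta> d"
begin

text \<open>The values of \<open>\<beta>\<close> off \<open>dyadics\<close> do not enter \<open>mD \<beta>\<close>; replacing them by 1 makes every
  factor a probability space, as \<open>product_prob_space\<close> demands.\<close>
definition beta_ext :: "real \<Rightarrow> real" where
  "beta_ext d = (if d \<in> dyadics then \<beta> d else 1)"

lemma beta_ext_pos: "0 < beta_ext d"
  using beta_pos by (simp add: beta_ext_def)

abbreviation m :: "real \<Rightarrow> int measure" where
  "m d \<equiv> mb (beta_ext d)"

abbreviation M :: "(real \<Rightarrow> int) measure" where
  "M \<equiv> PiM dyadics m"

lemma mD_eq: "mD \<beta> = M"
  unfolding mD_def by (intro PiM_cong) (auto simp: beta_ext_def)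

sublocale P: product_prob_space m dyadics
  unfolding product_prob_space_def product_prob_space_axioms_def product_sigma_finite_def
  using prob_space_mb[OF beta_ext_pos] by (auto simp: prob_space_imp_sigma_finite)

lemma space_M: "space M = (\<Pi>\<^sub>E d\<in>dyadics. UNIV)"
  by (simp add: space_PiM)

lemma shift_in_space: "shift h x \<in> space M"
  by (simp add: space_M shift_def)

lemma measurable_shift [measurable]: "shift h \<in> M \<rightarrow>\<^sub>M M"
proof -
  have "(\<lambda>x. \<lambda>d\<in>dyadics. h d + x d) \<in> M \<rightarrow>\<^sub>M M"
  proof (rule measurable_restrict)
    fix d assume "d \<in> dyadics"
    then have "(\<lambda>x. x d) \<in> M \<rightarrow>\<^sub>M m d" by (rule measurable_component_singleton)
    then show "(\<lambda>x. h d + x d) \<in> M \<rightarrow>\<^sub>M m d" by (rule measurable_compose) simp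
  qed
  then show ?thesis unfolding shift_def[abs_def] by simp
qed

lemma shift_shift: "shift h (shift k x) = shift (\<lambda>d. h d + k d) x"
  by (auto simp: shift_def fun_eq_iff add.assoc)

lemma shift_cong: "(\<And>d. d \<in> dyadics \<Longrightarrow> h d = k d) \<Longrightarrow> shift h = shift k"
  by (auto simp: shift_def fun_eq_iff)

lemma shift_zero: "x \<in> space M \<Longrightarrow> shift (\<lambda>d. 0) x = x"
  by (auto simp: shift_def fun_eq_iff space_M PiE_iff extensional_def)

lemma shift_uminus_shift: "x \<in> space M \<Longrightarrow> shift (\<lambda>d. - h d) (shift h x) = x"
  by (simp add: shift_shift shift_zero)

lemma shift_shift_uminus: "x \<in> space M \<Longrightarrow> shift h (shift (\<lambda>d. - h d) x) = x"
  by (simp add: shift_shift shift_zero)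

definition shift_vimage :: "(real \<Rightarrow> int) \<Rightarrow> (real \<Rightarrow> int) set \<Rightarrow> (real \<Rightarrow> int) set" where
  "shift_vimage h A = shift h -` A \<inter> space M"

lemma sets_shift_vimage [measurable]: "A \<in> sets M \<Longrightarrow> shift_vimage h A \<in> sets M"
  unfolding shift_vimage_def by (rule measurable_sets[OF measurable_shift])

lemma shift_vimage_add: "shift_vimage (\<lambda>d. h d + k d) A = shift_vimage k (shift_vimage h A)"
  unfolding shift_vimage_def using shift_shift shift_in_space by auto

lemma shift_vimage_cong:
  "(\<And>d. d \<in> dyadics \<Longrightarrow> h d = k d) \<Longrightarrow> shift_vimage h A = shift_vimage k A"
  unfolding shift_vimage_def by (simp add: shift_cong[of h k])

lemma shift_vimage_zero: "A \<in> sets M \<Longrightarrow> shift_vimage (\<lambda>d. 0) A = A"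
  unfolding shift_vimage_def using shift_zero sets.sets_into_space by fastforce

lemma shift_vimage_Un: "shift_vimage h (A \<union> B) = shift_vimage h A \<union> shift_vimage h B"
  by (auto simp: shift_vimage_def)

lemma shift_vimage_Diff: "shift_vimage h (A - B) = shift_vimage h A - shift_vimage h B"
  by (auto simp: shift_vimage_def)

lemma emeasure_distr_shift:
  "A \<in> sets M \<Longrightarrow> emeasure (distr M M (shift h)) A = emeasure M (shift_vimage h A)"
  unfolding shift_vimage_def by (simp add: emeasure_distr)

lemma shift_vimage_prod_emb_cong:
  assumes "J \<subseteq> dyadics" "\<And>d. d \<in> J \<Longrightarrow> h d = k d"
  shows "shift_vimage h (prod_emb dyadics m J X) = shift_vimage k (prod_emb dyadics m J X)"
proof -
  have "restrict (shift h x) J = restrict (shift k x) J" for x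
    using assms by (auto simp: shift_def restrict_def fun_eq_iff)
  then show ?thesis
    using shift_in_space unfolding shift_vimage_def prod_emb_def by (auto simp: space_M)
qed

definition shift_tv_le :: "(real \<Rightarrow> int) \<Rightarrow> ennreal \<Rightarrow> bool" where
  "shift_tv_le h e \<longleftrightarrow> (\<forall>B\<in>sets M. emeasure M (shift_vimage h B) \<le> emeasure M B + e
                                \<and> emeasure M B \<le> emeasure M (shift_vimage h B) + e)"

lemma shift_tv_le_add:
  assumes "shift_tv_le h e1" "shift_tv_le k e2"
  shows "shift_tv_le (\<lambda>d. h d + k d) (e1 + e2)"
  unfolding shift_tv_le_def shift_vimage_add
proof
  fix B assume B: "B \<in> sets M"
  then have B': "shift_vimage h B \<in> sets M" by measurable
  have "emeasure M (shift_vimage k (shift_vimage h B)) \<le> emeasure M (shift_vimage h B) + e2"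
    using assms(2) B' by (auto simp: shift_tv_le_def)
  also have "\<dots> \<le> emeasure M B + e1 + e2"
    using assms(1) B by (auto simp: shift_tv_le_def intro: add_right_mono)
  finally have 1: "emeasure M (shift_vimage k (shift_vimage h B)) \<le> emeasure M B + (e1 + e2)"
    by (simp add: add.assoc)
  have "emeasure M B \<le> emeasure M (shift_vimage h B) + e1"
    using assms(1) B by (auto simp: shift_tv_le_def)
  also have "\<dots> \<le> emeasure M (shift_vimage k (shift_vimage h B)) + e2 + e1"
    using assms(2) B' by (auto simp: shift_tv_le_def intro: add_right_mono)
  finally have 2: "emeasure M B \<le> emeasure M (shift_vimage k (shift_vimage h B)) + (e1 + e2)"
    by (simp add: add_ac)
  from 1 2 show "emeasure M (shift_vimage k (shift_vimage h B)) \<le> emeasure M B + (e1 + e2)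
      \<and> emeasure M B \<le> emeasure M (shift_vimage k (shift_vimage h B)) + (e1 + e2)" ..
qed

lemma shift_tv_le_mono: "shift_tv_le h e \<Longrightarrow> e \<le> e' \<Longrightarrow> shift_tv_le h e'"
  unfolding shift_tv_le_def by (meson add_left_mono order_trans)

lemma shift_tv_le_zero: "shift_tv_le (\<lambda>d. 0) 0"
  by (simp add: shift_tv_le_def shift_vimage_zero)

definition shift_null_preserving :: "(real \<Rightarrow> int) \<Rightarrow> bool" where
  "shift_null_preserving h \<longleftrightarrow> (\<forall>A\<in>null_sets M. shift_vimage h A \<in> null_sets M)"

lemma shift_null_preserving_add:
  "shift_null_preserving h \<Longrightarrow> shift_null_preserving k \<Longrightarrow> shift_null_preserving (\<lambda>d. h d + k d)"
  unfolding shift_null_preserving_def by (simp add: shift_vimage_add)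

lemma shift_null_preserving_zero: "shift_null_preserving (\<lambda>d. 0)"
  unfolding shift_null_preserving_def using shift_vimage_zero by (simp add: null_setsD2)

definition coord_density :: "real \<Rightarrow> int \<Rightarrow> (real \<Rightarrow> int) \<Rightarrow> real" where
  "coord_density j c x = mb_mass (beta_ext j) (x j - c) / mb_mass (beta_ext j) (x j)"

lemma coord_density_pos: "0 < coord_density j c x"
  using mb_mass_pos[OF beta_ext_pos] by (simp add: coord_density_def)

lemma borel_measurable_coord_density [measurable]:
  assumes "j \<in> dyadics"
  shows "coord_density j c \<in> borel_measurable M"
proof -
  have "(\<lambda>x. x j) \<in> M \<rightarrow>\<^sub>M m j" using assms by (rule measurable_component_singleton)
  then show ?thesis
    unfolding coord_density_def by (rule measurable_compose[where g="\<lambda>k. _ (k - c) / _ k"]) simp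
qed

lemma indicator_cylinder:
  assumes "finite J" "x \<in> space M"
  shows "indicator {x \<in> space M. \<forall>i\<in>J. x i \<in> A i} x = (\<Prod>i\<in>J. indicator (A i) (x i) :: ennreal)"
  using assms by (induction J rule: finite_induct) (auto simp: indicator_def)

lemma nn_integral_restrict:
  assumes "finite J" "J \<subseteq> dyadics" "G \<in> borel_measurable (PiM J m)"
  shows "(\<integral>\<^sup>+ x. G (restrict x J) \<partial>M) = (\<integral>\<^sup>+ y. G y \<partial>PiM J m)"
proof -
  have "(\<integral>\<^sup>+ y. G y \<partial>PiM J m) = (\<integral>\<^sup>+ y. G y \<partial>distr M (PiM J m) (\<lambda>x. restrict x J))"
    using P.distr_PiM_restrict_finite[OF assms(1,2)] by simp
  also have "\<dots> = (\<integral>\<^sup>+ x. G (restrict x J) \<partial>M)"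
    using assms by (intro nn_integral_distr) (auto intro: measurable_restrict_subset)
  finally show ?thesis by simp
qed

lemma borel_measurable_prod_coordinates:
  fixes f :: "real \<Rightarrow> int \<Rightarrow> ennreal"
  shows "(\<lambda>y. \<Prod>i\<in>J. f i (y i)) \<in> borel_measurable (PiM J m)"
proof (rule borel_measurable_prod_ennreal)
  fix i assume "i \<in> J"
  then show "(\<lambda>y. f i (y i)) \<in> borel_measurable (PiM J m)"
    by (rule measurable_compose[OF measurable_component_singleton]) simp
qed

lemma emeasure_shift_vimage_coord_cylinder:
  assumes "finite J" "J \<subseteq> dyadics" "j \<in> J"
  shows "emeasure M (shift_vimage ((\<lambda>_. 0)(j := c)) {x \<in> space M. \<forall>i\<in>J. x i \<in> A i})
    = (\<Prod>i\<in>J. emeasure (m i) (if i = j then (\<lambda>k. k + c) -` A j else A i))"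
proof -
  have "shift_vimage ((\<lambda>_. 0)(j := c)) {x \<in> space M. \<forall>i\<in>J. x i \<in> A i}
      = {x \<in> space M. \<forall>i\<in>J. x i \<in> (if i = j then (\<lambda>k. k + c) -` A j else A i)}"
    using assms by (auto simp: shift_vimage_def shift_def space_M add.commute)
  then show ?thesis
    using assms by (simp add: P.emeasure_PiM_Collect)
qed

lemma nn_integral_coord_density_cylinder:
  assumes J: "finite J" "J \<subseteq> dyadics" "j \<in> J"
  shows "(\<integral>\<^sup>+ x. ennreal (coord_density j c x) * indicator {x \<in> space M. \<forall>i\<in>J. x i \<in> A i} x \<partial>M)
    = (\<Prod>i\<in>J. emeasure (m i) (if i = j then (\<lambda>k. k + c) -` A j else A i))"
proof -
  define f :: "real \<Rightarrow> int \<Rightarrow> ennreal" where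
    "f i k = (if i = j then indicator (A j) k * ennreal (mb_mass (beta_ext j) (k - c) / mb_mass (beta_ext j) k)
              else indicator (A i) k)" for i k
  have "(\<integral>\<^sup>+ x. ennreal (coord_density j c x) * indicator {x \<in> space M. \<forall>i\<in>J. x i \<in> A i} x \<partial>M)
      = (\<integral>\<^sup>+ x. (\<lambda>y. \<Prod>i\<in>J. f i (y i)) (restrict x J) \<partial>M)"
  proof (intro nn_integral_cong)
    fix x assume x: "x \<in> space M"
    have "(\<Prod>i\<in>J. f i (restrict x J i)) = (\<Prod>i\<in>J. f i (x i))"
      by (intro prod.cong) auto
    also have "\<dots> = f j (x j) * (\<Prod>i\<in>J - {j}. f i (x i))"
      using J by (simp add: prod.remove)
    also have "(\<Prod>i\<in>J - {j}. f i (x i)) = (\<Prod>i\<in>J - {j}. indicator (A i) (x i))"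
      by (intro prod.cong) (auto simp: f_def)
    finally have "(\<Prod>i\<in>J. f i (restrict x J i)) = f j (x j) * (\<Prod>i\<in>J - {j}. indicator (A i) (x i))" .
    moreover have "(\<Prod>i\<in>J. indicator (A i) (x i) :: ennreal)
        = indicator (A j) (x j) * (\<Prod>i\<in>J - {j}. indicator (A i) (x i))"
      using J by (simp add: prod.remove)
    ultimately show "ennreal (coord_density j c x) * indicator {x \<in> space M. \<forall>i\<in>J. x i \<in> A i} x
        = (\<lambda>y. \<Prod>i\<in>J. f i (y i)) (restrict x J)"
      using indicator_cylinder[OF J(1) x] by (simp add: f_def coord_density_def mult_ac)
  qed
  also have "\<dots> = (\<integral>\<^sup>+ y. (\<Prod>i\<in>J. f i (y i)) \<partial>PiM J m)"
    using J(1,2) borel_measurable_prod_coordinates by (rule nn_integral_restrict)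
  also have "\<dots> = (\<Prod>i\<in>J. integral\<^sup>N (m i) (f i))"
    using J by (intro P.product_nn_integral_prod) auto
  also have "\<dots> = (\<Prod>i\<in>J. emeasure (m i) (if i = j then (\<lambda>k. k + c) -` A j else A i))"
  proof (intro prod.cong refl)
    fix i assume "i \<in> J"
    show "integral\<^sup>N (m i) (f i) = emeasure (m i) (if i = j then (\<lambda>k. k + c) -` A j else A i)"
      by (cases "i = j") (simp_all add: f_def[abs_def] nn_integral_mb_mass_ratio[OF beta_ext_pos])
  qed
  finally show ?thesis .
qed

lemma distr_shift_coord:
  assumes j: "j \<in> dyadics"
  shows "distr M M (shift ((\<lambda>_. 0)(j := c))) = density M (\<lambda>x. ennreal (coord_density j c x))"
proof (rule measure_eqI_PiM_infinite[where I=dyadics and M=m])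
  show "finite_measure (distr M M (shift ((\<lambda>_. 0)(j := c))))"
    by (rule P.finite_measure_distr[OF measurable_shift])
next
  fix A :: "real \<Rightarrow> int set" and J assume J: "finite J" "J \<subseteq> dyadics"
  define A' where "A' i = (if i \<in> J then A i else UNIV)" for i
  have cyl: "prod_emb dyadics m J (Pi\<^sub>E J A) = {x \<in> space M. \<forall>i\<in>insert j J. x i \<in> A' i}"
    unfolding prod_emb_def using J by (auto simp: space_M A'_def PiE_iff extensional_def)
  have sets: "prod_emb dyadics m J (Pi\<^sub>E J A) \<in> sets M"
    using J by (intro measurable_prod_emb sets_PiM_I_finite) auto
  have J': "finite (insert j J)" "insert j J \<subseteq> dyadics" "j \<in> insert j J"
    using J j by auto
  have "emeasure (distr M M (shift ((\<lambda>_. 0)(j := c)))) (prod_emb dyadics m J (Pi\<^sub>E J A))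
      = emeasure M (shift_vimage ((\<lambda>_. 0)(j := c)) (prod_emb dyadics m J (Pi\<^sub>E J A)))"
    by (rule emeasure_distr_shift[OF sets])
  also have "\<dots> = (\<Prod>i\<in>insert j J. emeasure (m i) (if i = j then (\<lambda>k. k + c) -` A' j else A' i))"
    unfolding cyl by (rule emeasure_shift_vimage_coord_cylinder[OF J'])
  also have "\<dots> = (\<integral>\<^sup>+ x. ennreal (coord_density j c x) * indicator (prod_emb dyadics m J (Pi\<^sub>E J A)) x \<partial>M)"
    unfolding cyl by (rule nn_integral_coord_density_cylinder[OF J', symmetric])
  also have "\<dots> = emeasure (density M (\<lambda>x. ennreal (coord_density j c x))) (prod_emb dyadics m J (Pi\<^sub>E J A))"
    using sets j by (simp add: emeasure_density)
  finally show "emeasure (distr M M (shift ((\<lambda>_. 0)(j := c)))) (prod_emb dyadics m J (Pi\<^sub>E J A))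
      = emeasure (density M (\<lambda>x. ennreal (coord_density j c x))) (prod_emb dyadics m J (Pi\<^sub>E J A))" .
qed simp_all

lemma emeasure_shift_vimage_coord:
  assumes "j \<in> dyadics" "B \<in> sets M"
  shows "emeasure M (shift_vimage ((\<lambda>_. 0)(j := c)) B)
    = (\<integral>\<^sup>+ x. ennreal (coord_density j c x) * indicator B x \<partial>M)"
  using assms
  by (simp add: emeasure_distr_shift[symmetric] distr_shift_coord emeasure_density del: fun_upd_apply)

lemma shift_null_preserving_coord:
  assumes "j \<in> dyadics"
  shows "shift_null_preserving ((\<lambda>_. 0)(j := c))"
  unfolding shift_null_preserving_def
proof
  fix A assume A: "A \<in> null_sets M"
  then have "emeasure M (shift_vimage ((\<lambda>_. 0)(j := c)) A) = 0"
    using emeasure_shift_vimage_coord[OF assms] nn_integral_null_set[OF A] by auto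
  then show "shift_vimage ((\<lambda>_. 0)(j := c)) A \<in> null_sets M"
    using A by (auto simp: null_sets_def sets_shift_vimage simp del: fun_upd_apply)
qed

lemma nn_integral_abs_coord_density_minus_1:
  assumes j: "j \<in> dyadics"
  shows "(\<integral>\<^sup>+ x. ennreal \<bar>coord_density j c x - 1\<bar> \<partial>M) = mb_transl_dist (beta_ext j) c"
proof -
  let ?g = "\<lambda>k. ennreal \<bar>mb_mass (beta_ext j) (k - c) / mb_mass (beta_ext j) k - 1\<bar>"
  have "(\<integral>\<^sup>+ x. ennreal \<bar>coord_density j c x - 1\<bar> \<partial>M) = (\<integral>\<^sup>+ k. ?g k \<partial>distr M (m j) (\<lambda>x. x j))"
    using j by (subst nn_integral_distr) (auto simp: coord_density_def)
  also have "\<dots> = (\<integral>\<^sup>+ k. ennreal (mb_mass (beta_ext j) k) * ?g k \<partial>count_space UNIV)"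
    using P.PiM_component[OF j] by (simp add: nn_integral_mb)
  also have "\<dots> = mb_transl_dist (beta_ext j) c"
    unfolding mb_transl_dist_def
  proof (intro nn_integral_cong)
    fix k
    have p: "0 < mb_mass (beta_ext j) k" using mb_mass_pos[OF beta_ext_pos] by auto
    then have "mb_mass (beta_ext j) k * \<bar>mb_mass (beta_ext j) (k - c) / mb_mass (beta_ext j) k - 1\<bar>
        = \<bar>mb_mass (beta_ext j) (k - c) - mb_mass (beta_ext j) k\<bar>"
      by (simp add: abs_mult[symmetric] field_simps)
    then show "ennreal (mb_mass (beta_ext j) k) * ?g k
        = ennreal \<bar>mb_mass (beta_ext j) (k - c) - mb_mass (beta_ext j) k\<bar>"
      using p by (simp add: ennreal_mult[symmetric])
  qed
  finally show ?thesis .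
qed

lemma shift_tv_le_coord:
  assumes j: "j \<in> dyadics"
  shows "shift_tv_le ((\<lambda>_. 0)(j := c)) (mb_transl_dist (beta_ext j) c)"
  unfolding shift_tv_le_def
proof
  fix B assume B: "B \<in> sets M"
  let ?\<rho> = "coord_density j c" and ?h = "(\<lambda>_. 0)(j := c)"
  have dist: "(\<integral>\<^sup>+ x. ennreal \<bar>?\<rho> x - 1\<bar> \<partial>M) = mb_transl_dist (beta_ext j) c"
    by (rule nn_integral_abs_coord_density_minus_1[OF j])
  have "emeasure M (shift_vimage ?h B) \<le> (\<integral>\<^sup>+ x. indicator B x + ennreal \<bar>?\<rho> x - 1\<bar> \<partial>M)"
    unfolding emeasure_shift_vimage_coord[OF j B]
  proof (intro nn_integral_mono)
    fix x
    have "?\<rho> x \<le> 1 + \<bar>?\<rho> x - 1\<bar>" by linarith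
    then have "ennreal (?\<rho> x) \<le> ennreal (1 + \<bar>?\<rho> x - 1\<bar>)" by (rule ennreal_leI)
    then have "ennreal (?\<rho> x) \<le> 1 + ennreal \<bar>?\<rho> x - 1\<bar>" by simp
    then show "ennreal (?\<rho> x) * indicator B x \<le> indicator B x + ennreal \<bar>?\<rho> x - 1\<bar>"
      by (cases "x \<in> B") auto
  qed
  also have "\<dots> = emeasure M B + mb_transl_dist (beta_ext j) c"
    using B j dist by (subst nn_integral_add) auto
  finally have 1: "emeasure M (shift_vimage ?h B) \<le> emeasure M B + mb_transl_dist (beta_ext j) c" .
  have "emeasure M B \<le> (\<integral>\<^sup>+ x. ennreal (?\<rho> x) * indicator B x + ennreal \<bar>?\<rho> x - 1\<bar> \<partial>M)"
    unfolding B[THEN nn_integral_indicator, symmetric]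
  proof (intro nn_integral_mono)
    fix x
    have "1 \<le> ennreal (?\<rho> x) + ennreal \<bar>?\<rho> x - 1\<bar>"
      using coord_density_pos[of j c x]
      by (simp add: ennreal_plus[symmetric] less_imp_le del: ennreal_plus)
    then show "indicator B x \<le> ennreal (?\<rho> x) * indicator B x + ennreal \<bar>?\<rho> x - 1\<bar>"
      by (cases "x \<in> B") auto
  qed
  also have "\<dots> = emeasure M (shift_vimage ?h B) + mb_transl_dist (beta_ext j) c"
    using B j dist by (subst nn_integral_add) (auto simp: emeasure_shift_vimage_coord)
  finally have 2: "emeasure M B \<le> emeasure M (shift_vimage ?h B) + mb_transl_dist (beta_ext j) c" .
  from 1 2 show "emeasure M (shift_vimage ?h B) \<le> emeasure M B + mb_transl_dist (beta_ext j) c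
      \<and> emeasure M B \<le> emeasure M (shift_vimage ?h B) + mb_transl_dist (beta_ext j) c" ..
qed

lemma shift_tv_le_finite_support:
  assumes "finite F" "F \<subseteq> dyadics" "\<And>d. d \<notin> F \<Longrightarrow> h d = 0"
  shows "shift_tv_le h (\<Sum>d\<in>F. mb_transl_dist (beta_ext d) (h d))"
  using assms
proof (induction F arbitrary: h rule: finite_induct)
  case empty
  then have "h = (\<lambda>d. 0)" by auto
  then show ?case using shift_tv_le_zero by simp
next
  case (insert j F)
  define h' where "h' = h(j := 0)"
  have IH: "shift_tv_le h' (\<Sum>d\<in>F. mb_transl_dist (beta_ext d) (h' d))"
    using insert by (intro insert.IH) (auto simp: h'_def)
  have "(\<Sum>d\<in>F. mb_transl_dist (beta_ext d) (h' d)) = (\<Sum>d\<in>F. mb_transl_dist (beta_ext d) (h d))"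
    using insert(2) by (intro sum.cong) (auto simp: h'_def)
  moreover have "shift_tv_le (\<lambda>d. ((\<lambda>_. 0)(j := h j)) d + h' d)
      (mb_transl_dist (beta_ext j) (h j) + (\<Sum>d\<in>F. mb_transl_dist (beta_ext d) (h' d)))"
    using insert IH by (intro shift_tv_le_add shift_tv_le_coord) auto
  moreover have "(\<lambda>d. ((\<lambda>_. 0)(j := h j)) d + h' d) = h" by (auto simp: h'_def)
  ultimately show ?case using insert(1,2) by simp
qed

lemma shift_null_preserving_finite_support:
  assumes "finite F" "F \<subseteq> dyadics" "\<And>d. d \<notin> F \<Longrightarrow> h d = 0"
  shows "shift_null_preserving h"
  using assms
proof (induction F arbitrary: h rule: finite_induct)
  case empty
  then have "h = (\<lambda>d. 0)" by auto
  then show ?case using shift_null_preserving_zero by simp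
next
  case (insert j F)
  have "shift_null_preserving (h(j := 0))"
    using insert by (intro insert.IH) auto
  then have "shift_null_preserving (\<lambda>d. ((\<lambda>_. 0)(j := h j)) d + (h(j := 0)) d)"
    using insert by (intro shift_null_preserving_add shift_null_preserving_coord) auto
  moreover have "(\<lambda>d. ((\<lambda>_. 0)(j := h j)) d + (h(j := 0)) d) = h" by auto
  ultimately show ?case by simp
qed

lemma cylinder_approx:
  assumes B: "B \<in> sets M" and "0 < \<epsilon>" and Q: "finite_measure Q" "sets Q = sets M"
  obtains J X where "finite J" "J \<subseteq> dyadics" "X \<in> sets (PiM J m)"
    "emeasure M (sym_diff B (prod_emb dyadics m J X)) \<le> ennreal \<epsilon>"
    "emeasure Q (sym_diff B (prod_emb dyadics m J X)) \<le> ennreal \<epsilon>"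
proof -
  have "B \<in> sigma_sets (space M) P.generator" "sets Q = sigma_sets (space M) P.generator"
    using B Q(2) P.sets_PiM_generator by simp_all
  then obtain C where C: "C \<in> P.generator" "measure M (sym_diff B C) < \<epsilon>" "measure Q (sym_diff B C) < \<epsilon>"
    using sigma_sets_approx_by_algebra[OF P.algebra_generator P.finite_measure_axioms
        P.sets_PiM_generator Q(1)] \<open>0 < \<epsilon>\<close> by blast
  then obtain J X where JX: "C = prod_emb dyadics m J X" "finite J" "J \<subseteq> dyadics" "X \<in> sets (PiM J m)"
    by (auto simp: P.generator.simps)
  have "emeasure M (sym_diff B C) \<le> ennreal \<epsilon>"
    using C(2) unfolding P.emeasure_eq_measure by (intro ennreal_leI) linarith
  moreover have "emeasure Q (sym_diff B C) \<le> ennreal \<epsilon>"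
    using C(3) unfolding finite_measure.emeasure_eq_measure[OF Q(1)] by (intro ennreal_leI) linarith
  ultimately show ?thesis
    using that[OF JX(2-4)] unfolding JX(1) by blast
qed

lemma shift_tv_le_on_cylinder:
  assumes "finite J" "J \<subseteq> dyadics" "X \<in> sets (PiM J m)"
    and "(\<Sum>d\<in>J. mb_transl_dist (beta_ext d) (h d)) \<le> e"
  shows "emeasure M (shift_vimage h (prod_emb dyadics m J X)) \<le> emeasure M (prod_emb dyadics m J X) + e"
    and "emeasure M (prod_emb dyadics m J X) \<le> emeasure M (shift_vimage h (prod_emb dyadics m J X)) + e"
proof -
  define hJ where "hJ d = (if d \<in> J then h d else 0)" for d
  have "shift_tv_le hJ (\<Sum>d\<in>J. mb_transl_dist (beta_ext d) (hJ d))"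
    using assms by (intro shift_tv_le_finite_support) (auto simp: hJ_def)
  moreover have "(\<Sum>d\<in>J. mb_transl_dist (beta_ext d) (hJ d)) \<le> e"
    using assms(4) by (simp add: hJ_def)
  ultimately have "shift_tv_le hJ e"
    by (rule shift_tv_le_mono)
  moreover have "shift_vimage h (prod_emb dyadics m J X) = shift_vimage hJ (prod_emb dyadics m J X)"
    using assms(2) by (intro shift_vimage_prod_emb_cong) (auto simp: hJ_def)
  moreover have "prod_emb dyadics m J X \<in> sets M"
    using assms by auto
  ultimately show "emeasure M (shift_vimage h (prod_emb dyadics m J X)) \<le> emeasure M (prod_emb dyadics m J X) + e"
    "emeasure M (prod_emb dyadics m J X) \<le> emeasure M (shift_vimage h (prod_emb dyadics m J X)) + e"
    unfolding shift_tv_le_def by auto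
qed

text \<open>Approximate a measurable set by a cylinder both for \<open>M\<close> and for the image of \<open>M\<close> under
  \<open>shift h\<close>; on the cylinder only finitely many coordinates of \<open>h\<close> act.\<close>
lemma shift_tv_le_of_finite_sums_le:
  assumes bound: "\<And>F. finite F \<Longrightarrow> F \<subseteq> dyadics \<Longrightarrow> (\<Sum>d\<in>F. mb_transl_dist (beta_ext d) (h d)) \<le> e"
  shows "shift_tv_le h e"
  unfolding shift_tv_le_def
proof
  fix B assume B: "B \<in> sets M"
  have approx: "emeasure M (shift_vimage h B) \<le> emeasure M B + e + ennreal \<epsilon>
      \<and> emeasure M B \<le> emeasure M (shift_vimage h B) + e + ennreal \<epsilon>" if "0 < \<epsilon>" for \<epsilon>
  proof -
    have "0 < \<epsilon> / 2" using that by simp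
    then obtain J X where JX: "finite J" "J \<subseteq> dyadics" "X \<in> sets (PiM J m)"
      "emeasure M (sym_diff B (prod_emb dyadics m J X)) \<le> ennreal (\<epsilon> / 2)"
      "emeasure (distr M M (shift h)) (sym_diff B (prod_emb dyadics m J X)) \<le> ennreal (\<epsilon> / 2)"
      using cylinder_approx[OF B _ P.finite_measure_distr[OF measurable_shift], of "\<epsilon> / 2" h] by auto
    define C where "C = prod_emb dyadics m J X"
    define S where "S = sym_diff B C"
    have C_sets: "C \<in> sets M" using JX by (auto simp: C_def)
    have S_sets: "S \<in> sets M" using B C_sets by (auto simp: S_def)
    have S_sum: "emeasure M S + emeasure M (shift_vimage h S) \<le> ennreal \<epsilon>"
    proof -
      have "emeasure M S + emeasure M (shift_vimage h S) \<le> ennreal (\<epsilon> / 2) + ennreal (\<epsilon> / 2)"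
        using JX(4,5) S_sets by (intro add_mono) (simp_all add: S_def C_def emeasure_distr_shift)
      also have "\<dots> = ennreal \<epsilon>"
        using that by (simp add: ennreal_plus[symmetric] del: ennreal_plus)
      finally show ?thesis .
    qed
    have incl: "shift_vimage h B \<subseteq> shift_vimage h C \<union> shift_vimage h S" "C \<subseteq> B \<union> S"
      "B \<subseteq> C \<union> S" "shift_vimage h C \<subseteq> shift_vimage h B \<union> shift_vimage h S"
      unfolding S_def shift_vimage_def by blast+
    note C_close = shift_tv_le_on_cylinder[OF JX(1-3) bound[OF JX(1,2)], folded C_def]
    have "emeasure M (shift_vimage h B) \<le> emeasure M B + e + (emeasure M S + emeasure M (shift_vimage h S))"
      using incl(1,2) B S_sets sets_shift_vimage[OF C_sets] sets_shift_vimage[OF S_sets] C_close(1)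
      by (rule emeasure_le_of_approximations)
    also have "\<dots> \<le> emeasure M B + e + ennreal \<epsilon>"
      using S_sum by (rule add_left_mono)
    moreover have "emeasure M B \<le> emeasure M (shift_vimage h B) + e + (emeasure M (shift_vimage h S) + emeasure M S)"
      using incl(3,4) sets_shift_vimage[OF B] sets_shift_vimage[OF S_sets] C_sets S_sets C_close(2)
      by (rule emeasure_le_of_approximations)
    moreover have "\<dots> \<le> emeasure M (shift_vimage h B) + e + ennreal \<epsilon>"
      using S_sum by (intro add_left_mono) (simp add: add.commute)
    ultimately show ?thesis
      by (meson order_trans)
  qed
  show "emeasure M (shift_vimage h B) \<le> emeasure M B + e \<and> emeasure M B \<le> emeasure M (shift_vimage h B) + e"
    using approx by (auto intro: ennreal_le_epsilon)
qed

lemma shift_null_preserving_of_small_tails: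
  assumes "\<And>\<epsilon>. 0 < \<epsilon> \<Longrightarrow> \<exists>F. finite F \<and> F \<subseteq> dyadics \<and> shift_tv_le (\<lambda>d. if d \<in> F then 0 else h d) (ennreal \<epsilon>)"
  shows "shift_null_preserving h"
  unfolding shift_null_preserving_def
proof
  fix A assume A: "A \<in> null_sets M"
  have "emeasure M (shift_vimage h A) \<le> 0 + ennreal \<epsilon>" if \<epsilon>: "0 < \<epsilon>" for \<epsilon>
  proof -
    obtain F where F: "finite F" "F \<subseteq> dyadics"
      "shift_tv_le (\<lambda>d. if d \<in> F then 0 else h d) (ennreal \<epsilon>)"
      using assms[OF \<epsilon>] by blast
    define hF where "hF d = (if d \<in> F then h d else 0)" for d
    have "shift_null_preserving hF"
      using F by (intro shift_null_preserving_finite_support[of F]) (auto simp: hF_def)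
    then have null: "shift_vimage hF A \<in> null_sets M"
      using A unfolding shift_null_preserving_def by blast
    have "shift_vimage h A = shift_vimage (\<lambda>d. hF d + (if d \<in> F then 0 else h d)) A"
      by (intro shift_vimage_cong) (simp add: hF_def)
    also have "\<dots> = shift_vimage (\<lambda>d. if d \<in> F then 0 else h d) (shift_vimage hF A)"
      by (rule shift_vimage_add)
    finally have "emeasure M (shift_vimage h A) \<le> emeasure M (shift_vimage hF A) + ennreal \<epsilon>"
      using F(3) null_setsD2[OF null] unfolding shift_tv_le_def by simp
    then show ?thesis
      using null by (simp add: null_setsD1)
  qed
  then have "emeasure M (shift_vimage h A) \<le> 0"
    by (rule ennreal_le_epsilon)
  then show "shift_vimage h A \<in> null_sets M"
    using sets_shift_vimage[OF null_setsD2[OF A]] by (simp add: null_sets_def)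
qed

end

lemma summable_on_min_1_sqrt_of_powr:
  fixes \<beta> :: "real \<Rightarrow> real" and p :: real
  assumes "\<forall>d\<in>D. 0 < \<beta> d" "0 < p" "p < 1/2" "(\<lambda>d. \<beta> d powr p) summable_on D"
  shows "(\<lambda>d. min 1 (sqrt (\<beta> d))) summable_on D"
proof (rule summable_on_comparison_test[OF assms(4)])
  fix d assume "d \<in> D"
  then have b: "0 < \<beta> d" using assms(1) by auto
  then show "0 \<le> min 1 (sqrt (\<beta> d))" by simp
  show "min 1 (sqrt (\<beta> d)) \<le> \<beta> d powr p"
  proof (cases "\<beta> d \<le> 1")
    case True
    have "sqrt (\<beta> d) = \<beta> d powr (1/2)" using b by (simp add: powr_half_sqrt)
    also have "\<dots> \<le> \<beta> d powr p" using True b assms(2,3) by (intro powr_mono') auto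
    finally show ?thesis by simp
  next
    case False
    then have "1 \<le> \<beta> d powr p" using assms(2) by (intro ge_one_powr_ge_zero) auto
    then show ?thesis by simp
  qed
qed

locale gaussian_product_summable = gaussian_product +
  assumes summable_min_1_sqrt: "(\<lambda>d. min 1 (sqrt (\<beta> d))) summable_on dyadics"
begin

lemma shift_tv_le_outside_finite:
  assumes "0 < \<epsilon>" "0 \<le> G"
  obtains F where "finite F" "F \<subseteq> dyadics"
    "\<And>h. (\<And>d. \<bar>real_of_int (h d)\<bar> \<le> G) \<Longrightarrow> (\<And>d. d \<in> F \<Longrightarrow> h d = 0) \<Longrightarrow> shift_tv_le h (ennreal \<epsilon>)"
proof -
  define \<phi> where "\<phi> d = min 1 (sqrt (beta_ext d))" for d
  have \<phi>_nonneg: "0 \<le> \<phi> d" for d using beta_ext_pos[of d] by (simp add: \<phi>_def)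
  have summable: "\<phi> summable_on dyadics"
    using summable_min_1_sqrt by (rule summable_on_cong[THEN iffD1, rotated]) (auto simp: \<phi>_def beta_ext_def)
  have "0 < \<epsilon> / (4 * G + 1)" using assms by simp
  then obtain F where F: "finite F" "F \<subseteq> dyadics"
    "\<And>F'. finite F' \<Longrightarrow> F' \<subseteq> dyadics - F \<Longrightarrow> sum \<phi> F' \<le> \<epsilon> / (4 * G + 1)"
    using nonneg_summable_on_small_tail[OF summable \<phi>_nonneg] by blast
  have "shift_tv_le h (ennreal \<epsilon>)"
    if h: "\<And>d. \<bar>real_of_int (h d)\<bar> \<le> G" "\<And>d. d \<in> F \<Longrightarrow> h d = 0" for h
  proof (rule shift_tv_le_of_finite_sums_le)
    fix F' assume F': "finite F'" "F' \<subseteq> dyadics"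
    have "(\<Sum>d\<in>F'. mb_transl_dist (beta_ext d) (h d)) = (\<Sum>d\<in>F' - F. mb_transl_dist (beta_ext d) (h d))"
      using F' h(2) by (intro sum.mono_neutral_right) auto
    also have "\<dots> \<le> (\<Sum>d\<in>F' - F. ennreal (4 * G * \<phi> d))"
    proof (rule sum_mono)
      fix d
      have "mb_transl_dist (beta_ext d) (h d) \<le> ennreal (4 * \<bar>real_of_int (h d)\<bar> * \<phi> d)"
        unfolding \<phi>_def by (rule mb_transl_dist_le[OF beta_ext_pos])
      also have "\<dots> \<le> ennreal (4 * G * \<phi> d)"
        using h(1) \<phi>_nonneg by (intro ennreal_leI mult_right_mono) auto
      finally show "mb_transl_dist (beta_ext d) (h d) \<le> ennreal (4 * G * \<phi> d)" .
    qed
    also have "\<dots> = ennreal (4 * G * sum \<phi> (F' - F))"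
      using assms(2) \<phi>_nonneg by (simp add: sum_distrib_left)
    also have "\<dots> \<le> ennreal (4 * G * (\<epsilon> / (4 * G + 1)))"
      using F(3)[of "F' - F"] F' assms(2) by (intro ennreal_leI mult_left_mono) auto
    also have "\<dots> \<le> ennreal \<epsilon>"
      using assms by (intro ennreal_leI) (simp add: field_simps)
    finally show "(\<Sum>d\<in>F'. mb_transl_dist (beta_ext d) (h d)) \<le> ennreal \<epsilon>" .
  qed
  with F that show ?thesis by blast
qed

lemma shift_null_preserving_bounded:
  assumes "\<And>d. \<bar>real_of_int (h d)\<bar> \<le> G"
  shows "shift_null_preserving h"
proof (rule shift_null_preserving_of_small_tails)
  fix \<epsilon> :: real assume "0 < \<epsilon>"
  have "0 \<le> G" using assms[of 0] by linarith
  obtain F where F: "finite F" "F \<subseteq> dyadics"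
    "\<And>h. (\<And>d. \<bar>real_of_int (h d)\<bar> \<le> G) \<Longrightarrow> (\<And>d. d \<in> F \<Longrightarrow> h d = 0) \<Longrightarrow> shift_tv_le h (ennreal \<epsilon>)"
    using shift_tv_le_outside_finite[OF \<open>0 < \<epsilon>\<close> \<open>0 \<le> G\<close>] by blast
  have "shift_tv_le (\<lambda>d. if d \<in> F then 0 else h d) (ennreal \<epsilon>)"
    using assms \<open>0 \<le> G\<close> by (intro F(3)) auto
  with F(1,2) show "\<exists>F. finite F \<and> F \<subseteq> dyadics \<and> shift_tv_le (\<lambda>d. if d \<in> F then 0 else h d) (ennreal \<epsilon>)"
    by blast
qed

lemma absolutely_continuous_distr_shift:
  assumes "\<And>d. \<bar>real_of_int (h d)\<bar> \<le> G"
  shows "absolutely_continuous M (distr M M (shift h))"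
  unfolding absolutely_continuous_def
proof
  fix A assume A: "A \<in> null_sets M"
  then have "shift_vimage h A \<in> null_sets M"
    using shift_null_preserving_bounded[OF assms] unfolding shift_null_preserving_def by auto
  then show "A \<in> null_sets (distr M M (shift h))"
    using A by (auto simp: null_sets_def emeasure_distr_shift)
qed

lemma nonsingular_aut_shift:
  assumes "\<And>d. \<bar>real_of_int (h d)\<bar> \<le> G"
  shows "nonsingular_aut M (shift h)"
  unfolding nonsingular_aut_def
proof (intro conjI)
  show "\<exists>S\<in>M \<rightarrow>\<^sub>M M. \<forall>x\<in>space M. S (shift h x) = x \<and> shift h (S x) = x"
    using shift_uminus_shift shift_shift_uminus by (intro bexI[of _ "shift (\<lambda>d. - h d)"]) auto
  show "absolutely_continuous M (distr M M (shift h))"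
    using assms by (rule absolutely_continuous_distr_shift)
  show "absolutely_continuous (distr M M (shift h)) M"
    unfolding absolutely_continuous_def
  proof
    fix A assume A: "A \<in> null_sets (distr M M (shift h))"
    then have A_sets: "A \<in> sets M" by (simp add: null_sets_def)
    then have "shift_vimage h A \<in> null_sets M"
      using A by (auto simp: null_sets_def emeasure_distr_shift)
    then have "shift_vimage (\<lambda>d. - h d) (shift_vimage h A) \<in> null_sets M"
      using shift_null_preserving_bounded[of "\<lambda>d. - h d" G] assms
      unfolding shift_null_preserving_def by auto
    moreover have "shift_vimage (\<lambda>d. - h d) (shift_vimage h A) = A"
      using shift_vimage_add[of h "\<lambda>d. - h d" A] shift_vimage_zero[OF A_sets] by simp
    ultimately show "A \<in> null_sets M" by simp
  qed
qed simp

lemma shift_vimage_diff_shift: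
  "shift_vimage h A = shift_vimage (\<lambda>d. h d - g d) (shift_vimage g A)"
  using shift_vimage_add[of g "\<lambda>d. h d - g d" A] by simp

lemma L1_RN_deriv_distr_shift_le:
  assumes g: "\<And>d. \<bar>real_of_int (g d)\<bar> \<le> G" and g': "\<And>d. \<bar>real_of_int (g' d)\<bar> \<le> G"
    and tv: "shift_tv_le (\<lambda>d. g' d - g d) e"
  shows "(\<integral>\<^sup>+ x. ennreal \<bar>enn2real (RN_deriv M (distr M M (shift g')) x)
      - enn2real (RN_deriv M (distr M M (shift g)) x)\<bar> \<partial>M) \<le> 2 * e"
proof (rule sigma_finite_measure.RN_deriv_L1_dist_le)
  show "sigma_finite_measure M"
    by (rule prob_space_imp_sigma_finite[OF P.prob_space_axioms])
  show "finite_measure (distr M M (shift g'))" "finite_measure (distr M M (shift g))"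
    by (rule P.finite_measure_distr[OF measurable_shift])+
  show "absolutely_continuous M (distr M M (shift g'))"
    using g' by (rule absolutely_continuous_distr_shift)
  show "absolutely_continuous M (distr M M (shift g))"
    using g by (rule absolutely_continuous_distr_shift)
  fix B assume "B \<in> sets M"
  then show "emeasure (distr M M (shift g')) B \<le> emeasure (distr M M (shift g)) B + e"
    "emeasure (distr M M (shift g)) B \<le> emeasure (distr M M (shift g')) B + e"
    using tv sets_shift_vimage[of B g]
    by (auto simp: emeasure_distr_shift shift_tv_le_def shift_vimage_diff_shift[of g' B g])
qed simp_all

lemma tendsto_L1_RN_deriv_distr_shift:
  assumes g: "\<And>d. \<bar>real_of_int (g d)\<bar> \<le> G" and gs: "\<And>n d. \<bar>real_of_int (gs n d)\<bar> \<le> G"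
    and conv: "\<And>d. eventually (\<lambda>n. gs n d = g d) sequentially"
  shows "(\<lambda>n. \<integral>\<^sup>+ x. ennreal \<bar>enn2real (RN_deriv M (distr M M (shift (gs n))) x)
      - enn2real (RN_deriv M (distr M M (shift g)) x)\<bar> \<partial>M) \<longlonglongrightarrow> 0"
proof (rule tendsto_zero_ennreal_le)
  fix \<epsilon> :: real assume "0 < \<epsilon>"
  then have "0 < \<epsilon> / 2" by simp
  moreover have "0 \<le> 2 * G" using g[of 0] by linarith
  ultimately obtain F where F: "finite F" "F \<subseteq> dyadics"
    "\<And>h. (\<And>d. \<bar>real_of_int (h d)\<bar> \<le> 2 * G) \<Longrightarrow> (\<And>d. d \<in> F \<Longrightarrow> h d = 0) \<Longrightarrow> shift_tv_le h (ennreal (\<epsilon> / 2))"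
    using shift_tv_le_outside_finite by metis
  have "eventually (\<lambda>n. \<forall>d\<in>F. gs n d = g d) sequentially"
    using F(1) conv by (simp add: eventually_ball_finite)
  then show "eventually (\<lambda>n. (\<integral>\<^sup>+ x. ennreal \<bar>enn2real (RN_deriv M (distr M M (shift (gs n))) x)
      - enn2real (RN_deriv M (distr M M (shift g)) x)\<bar> \<partial>M) \<le> ennreal \<epsilon>) sequentially"
  proof (rule eventually_mono)
    fix n assume "\<forall>d\<in>F. gs n d = g d"
    moreover have "\<bar>real_of_int (gs n d - g d)\<bar> \<le> 2 * G" for d
      using g[of d] gs[of n d] by linarith
    ultimately have "shift_tv_le (\<lambda>d. gs n d - g d) (ennreal (\<epsilon> / 2))"
      by (intro F(3)) auto
    with g gs have "(\<integral>\<^sup>+ x. ennreal \<bar>enn2real (RN_deriv M (distr M M (shift (gs n))) x)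
        - enn2real (RN_deriv M (distr M M (shift g)) x)\<bar> \<partial>M) \<le> 2 * ennreal (\<epsilon> / 2)"
      by (rule L1_RN_deriv_distr_shift_le)
    also have "2 * ennreal (\<epsilon> / 2) = ennreal \<epsilon>"
      using \<open>0 < \<epsilon>\<close> by (simp add: mult_2 ennreal_plus[symmetric] del: ennreal_plus)
    finally show "(\<integral>\<^sup>+ x. ennreal \<bar>enn2real (RN_deriv M (distr M M (shift (gs n))) x)
        - enn2real (RN_deriv M (distr M M (shift g)) x)\<bar> \<partial>M) \<le> ennreal \<epsilon>" .
  qed
qed

text \<open>Approximate \<open>B\<close> by a cylinder \<open>C\<close>; eventually \<open>hs n\<close> vanishes on the base of \<open>C\<close>, so
  \<open>shift (hs n)\<close> fixes \<open>C\<close> and moves \<open>B\<close> only by the image of \<open>B \<Delta> C\<close>.\<close>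
lemma tendsto_emeasure_symdiff_shift_vimage:
  assumes B: "B \<in> sets M" and bounded: "\<And>n d. \<bar>real_of_int (hs n d)\<bar> \<le> G"
    and conv: "\<And>d. eventually (\<lambda>n. hs n d = 0) sequentially"
  shows "(\<lambda>n. emeasure M (sym_diff B (shift_vimage (hs n) B))) \<longlonglongrightarrow> 0"
proof (rule tendsto_zero_ennreal_le)
  fix \<epsilon> :: real assume "0 < \<epsilon>"
  then have "0 < \<epsilon> / 3" by simp
  then obtain J X where JX: "finite J" "J \<subseteq> dyadics" "X \<in> sets (PiM J m)"
    "emeasure M (sym_diff B (prod_emb dyadics m J X)) \<le> ennreal (\<epsilon> / 3)"
    using cylinder_approx[OF B \<open>0 < \<epsilon> / 3\<close> P.finite_measure_axioms] by auto
  define C where "C = prod_emb dyadics m J X"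
  define S where "S = sym_diff B C"
  have C_sets: "C \<in> sets M" using JX by (auto simp: C_def)
  have S_sets: "S \<in> sets M" unfolding S_def using B C_sets by auto
  have "0 \<le> G" using bounded[of 0 0] by linarith
  then obtain F where F: "finite F" "F \<subseteq> dyadics"
    "\<And>h. (\<And>d. \<bar>real_of_int (h d)\<bar> \<le> G) \<Longrightarrow> (\<And>d. d \<in> F \<Longrightarrow> h d = 0) \<Longrightarrow> shift_tv_le h (ennreal (\<epsilon> / 3))"
    using shift_tv_le_outside_finite[OF \<open>0 < \<epsilon> / 3\<close>] by metis
  have "eventually (\<lambda>n. \<forall>d\<in>J \<union> F. hs n d = 0) sequentially"
    using F(1) JX(1) conv by (simp add: eventually_ball_finite)
  then show "eventually (\<lambda>n. emeasure M (sym_diff B (shift_vimage (hs n) B)) \<le> ennreal \<epsilon>) sequentially"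
  proof (rule eventually_mono)
    fix n assume vanish: "\<forall>d\<in>J \<union> F. hs n d = 0"
    have tv: "shift_tv_le (hs n) (ennreal (\<epsilon> / 3))"
      using bounded vanish by (intro F(3)) auto
    have "shift_vimage (hs n) C = shift_vimage (\<lambda>d. 0) C"
      unfolding C_def using JX(2) vanish by (intro shift_vimage_prod_emb_cong) auto
    then have "shift_vimage (hs n) C = C"
      using shift_vimage_zero[OF C_sets] by simp
    then have "sym_diff B (shift_vimage (hs n) B) \<subseteq> S \<union> shift_vimage (hs n) S"
      unfolding S_def shift_vimage_Un shift_vimage_Diff by blast
    then have "emeasure M (sym_diff B (shift_vimage (hs n) B)) \<le> emeasure M S + emeasure M (shift_vimage (hs n) S)"
      using S_sets sets_shift_vimage[OF S_sets]
      by (intro order_trans[OF emeasure_mono emeasure_subadditive]) auto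
    also have "\<dots> \<le> ennreal (\<epsilon> / 3) + (ennreal (\<epsilon> / 3) + ennreal (\<epsilon> / 3))"
      using JX(4) tv S_sets unfolding shift_tv_le_def S_def C_def
      by (intro add_mono order_trans[OF _ add_right_mono[OF JX(4)]]) auto
    also have "\<dots> = ennreal \<epsilon>"
      using \<open>0 < \<epsilon>\<close> by (simp add: ennreal_plus[symmetric] del: ennreal_plus)
    finally show "emeasure M (sym_diff B (shift_vimage (hs n) B)) \<le> ennreal \<epsilon>" .
  qed
qed

lemma weak_conv_shift:
  assumes g: "\<And>d. \<bar>real_of_int (g d)\<bar> \<le> G" and gs: "\<And>n d. \<bar>real_of_int (gs n d)\<bar> \<le> G"
    and conv: "\<And>d. eventually (\<lambda>n. gs n d = g d) sequentially"
  shows "weak_conv M (\<lambda>n. shift (gs n)) (shift g)"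
  unfolding weak_conv_def
proof (intro conjI ballI)
  show "(\<lambda>n. \<integral>\<^sup>+ x. ennreal \<bar>enn2real (RN_deriv M (distr M M (shift (gs n))) x)
      - enn2real (RN_deriv M (distr M M (shift g)) x)\<bar> \<partial>M) \<longlonglongrightarrow> 0"
    using assms by (rule tendsto_L1_RN_deriv_distr_shift)
next
  fix A assume "A \<in> sets M"
  have "\<bar>real_of_int (gs n d - g d)\<bar> \<le> 2 * G" for n d
    using g[of d] gs[of n d] by linarith
  moreover have "eventually (\<lambda>n. gs n d - g d = 0) sequentially" for d
    using conv[of d] by simp
  ultimately have "(\<lambda>n. emeasure M (sym_diff (shift_vimage g A)
      (shift_vimage (\<lambda>d. gs n d - g d) (shift_vimage g A)))) \<longlonglongrightarrow> 0"
    using sets_shift_vimage[OF \<open>A \<in> sets M\<close>] by (intro tendsto_emeasure_symdiff_shift_vimage)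
  then have "(\<lambda>n. emeasure M (sym_diff (shift_vimage g A) (shift_vimage (gs n) A))) \<longlonglongrightarrow> 0"
    by (simp add: shift_vimage_diff_shift[of "gs _" A g, symmetric])
  then have "(\<lambda>n. enn2real (emeasure M (sym_diff (shift_vimage g A) (shift_vimage (gs n) A)))) \<longlonglongrightarrow> 0"
    by (intro tendsto_enn2real) simp_all
  then show "(\<lambda>n. measure M (sym_diff (shift g -` A \<inter> space M) (shift (gs n) -` A \<inter> space M))) \<longlonglongrightarrow> 0"
    by (simp add: shift_vimage_def measure_def)
qed

end

section \<open>Dyadic step approximants\<close>

lemma finite_dyadics_common_denominator:
  assumes "finite S" "S \<subseteq> dyadics"
  obtains N where "1 \<le> N" "\<And>s. s \<in> S \<Longrightarrow> \<exists>a::nat. s = real a / 2 ^ N"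
proof -
  have "\<exists>N\<ge>1. \<forall>s\<in>S. \<exists>a::nat. s = real a / 2 ^ N"
    using assms
  proof (induction S rule: finite_induct)
    case (insert s S)
    then obtain N where N: "1 \<le> N" "\<forall>t\<in>S. \<exists>a::nat. t = real a / 2 ^ N" by auto
    from insert.prems obtain a k where s: "s = real a / 2 ^ k" unfolding dyadics_def by auto
    have "\<exists>b::nat. s = real b / 2 ^ (N + k)"
      using s by (intro exI[of _ "a * 2 ^ N"]) (simp add: power_add)
    moreover have "\<exists>b::nat. t = real b / 2 ^ (N + k)" if t: "t \<in> S" for t
    proof -
      obtain b :: nat where "t = real b / 2 ^ N" using N(2) t by blast
      then have "t = real (b * 2 ^ k) / 2 ^ (N + k)" by (simp add: power_add)
      then show ?thesis by blast
    qed
    ultimately show ?case using N(1) by (intro exI[of _ "N + k"]) auto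
  qed auto
  with that show ?thesis by blast
qed

lemma dyadic_refine:
  assumes "s = real a / 2 ^ N" "N \<le> m"
  shows "s = real (a * 2 ^ (m - N)) / 2 ^ m"
proof -
  obtain k where "m = N + k" using assms(2) le_Suc_ex by blast
  then show ?thesis using assms(1) by (simp add: power_add)
qed

lemma dyadic_interval_unique:
  fixes a j :: nat
  assumes "real j / 2 ^ m \<le> d" "d < (real j + 1) / 2 ^ m"
  shows "real a / 2 ^ m \<le> d \<and> d < real a / 2 ^ m + 1 / 2 ^ m \<longleftrightarrow> a = j"
proof -
  have "\<lfloor>d * 2 ^ m\<rfloor> = int j"
    using assms by (intro floor_unique) (simp_all add: field_simps)
  moreover have "real a / 2 ^ m \<le> d \<and> d < real a / 2 ^ m + 1 / 2 ^ m \<longleftrightarrow> \<lfloor>d * 2 ^ m\<rfloor> = int a"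
    by (simp add: floor_eq_iff field_simps)
  ultimately show ?thesis by auto
qed

definition dyadic_step :: "(real \<Rightarrow> int) \<Rightarrow> real set \<Rightarrow> nat \<Rightarrow> real \<Rightarrow> int" where
  "dyadic_step g S m d =
     (if d \<in> dyadics then \<Sum>s\<in>S. if s \<le> d \<and> d < s + 1 / 2 ^ m then g s else 0 else 0)"

lemma abs_dyadic_step_le: "\<bar>real_of_int (dyadic_step g S m d)\<bar> \<le> (\<Sum>s\<in>S. \<bar>real_of_int (g s)\<bar>)"
proof (cases "d \<in> dyadics")
  case True
  then have "\<bar>real_of_int (dyadic_step g S m d)\<bar>
      = \<bar>\<Sum>s\<in>S. real_of_int (if s \<le> d \<and> d < s + 1 / 2 ^ m then g s else 0)\<bar>"
    by (simp add: dyadic_step_def)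
  also have "\<dots> \<le> (\<Sum>s\<in>S. \<bar>real_of_int (if s \<le> d \<and> d < s + 1 / 2 ^ m then g s else 0)\<bar>)"
    by (rule sum_abs)
  also have "\<dots> \<le> (\<Sum>s\<in>S. \<bar>real_of_int (g s)\<bar>)"
    by (intro sum_mono) auto
  finally show ?thesis .
qed (simp add: dyadic_step_def sum_nonneg)

context
  fixes S :: "real set" and N :: nat
  assumes S: "finite S" "S \<subseteq> dyadics" and N: "\<And>s. s \<in> S \<Longrightarrow> \<exists>a::nat. s = real a / 2 ^ N"
begin

lemma dyadic_step_eq_on_interval:
  assumes "N \<le> m" "real j / 2 ^ m \<le> d" "d < (real j + 1) / 2 ^ m" "d \<in> dyadics"
  shows "dyadic_step g S m d = (\<Sum>s\<in>S. if s = real j / 2 ^ m then g s else 0)"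
  unfolding dyadic_step_def using assms(4)
proof (simp, intro sum.cong refl)
  fix s assume "s \<in> S"
  then obtain a :: nat where a: "s = real a / 2 ^ m"
    using N dyadic_refine assms(1) by blast
  have "(s \<le> d \<and> d < s + 1 / 2 ^ m) \<longleftrightarrow> a = j"
    unfolding a by (rule dyadic_interval_unique[OF assms(2,3)])
  also have "\<dots> \<longleftrightarrow> s = real j / 2 ^ m"
    unfolding a by (simp add: divide_right_mono)
  finally show "(if s \<le> d \<and> d < s + 1 / 2 ^ m then g s else 0) = (if s = real j / 2 ^ m then g s else 0)"
    by simp
qed

lemma dyadic_step_in_Zfr:
  assumes "N \<le> m" "1 \<le> m"
  shows "dyadic_step g S m \<in> Zfr"
proof -
  define ds where "ds = map (\<lambda>j. real j / 2 ^ m) [0..<2 ^ m + 1]"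
  have len: "length ds = 2 ^ m + 1" by (simp add: ds_def)
  have nth: "ds ! j = real j / 2 ^ m" if "j < 2 ^ m + 1" for j
    using that unfolding ds_def by (simp del: upt_Suc add: nth_map)
  have "std_dyadic_partition ds"
    unfolding std_dyadic_partition_def
  proof (intro conjI allI impI)
    show "sorted_wrt (<) ds"
      unfolding ds_def sorted_wrt_map
      by (rule sorted_wrt_mono_rel[OF _ sorted_wrt_upt]) (simp add: divide_strict_right_mono)
    show "last ds = 1" by (simp add: ds_def last_map)
    fix j assume "j < length ds - 1"
    then show "\<exists>a k. ds ! j = real a / 2 ^ k \<and> ds ! (j + 1) = (real a + 1) / 2 ^ k"
      using len nth[of j] nth[of "j + 1"] by (intro exI[of _ j] exI[of _ m]) simp
  qed (use len nth[of 0] in simp_all)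
  moreover have "\<exists>c. \<forall>d\<in>dyadics. ds ! j \<le> d \<and> d < ds ! (j + 1) \<longrightarrow> dyadic_step g S m d = c"
    if "j < length ds - 1" for j
    using that len nth[of j] nth[of "j + 1"] dyadic_step_eq_on_interval[OF assms(1)]
    by (intro exI ballI impI) (auto simp: add.commute)
  moreover have "\<forall>d. d \<notin> dyadics \<longrightarrow> dyadic_step g S m d = 0"
    by (simp add: dyadic_step_def)
  ultimately show ?thesis
    unfolding Zfr_def by blast
qed

lemma dyadic_step_eq_on_support:
  assumes "N \<le> m" "d \<in> S"
  shows "dyadic_step g S m d = g d"
proof -
  obtain j :: nat where dj: "d = real j / 2 ^ m"
    using N dyadic_refine assms by blast
  have "dyadic_step g S m d = (\<Sum>s\<in>S. if s = d then g s else 0)"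
    using dyadic_step_eq_on_interval[OF assms(1), of j d] S assms(2) dj
    by (auto simp: divide_strict_right_mono)
  also have "\<dots> = g d" using S(1) assms(2) by simp
  finally show ?thesis .
qed

lemma dyadic_step_eq_0:
  assumes "d \<notin> S" "\<And>s. s \<in> S \<Longrightarrow> s < d \<Longrightarrow> 1 / 2 ^ m \<le> d - s"
  shows "dyadic_step g S m d = 0"
proof -
  have "\<not> (s \<le> d \<and> d < s + 1 / 2 ^ m)" if "s \<in> S" for s
    using assms that by (cases "s = d") force+
  then show ?thesis
    unfolding dyadic_step_def by (auto intro!: sum.neutral)
qed

lemma eventually_dyadic_step_eq:
  assumes "\<And>d. d \<notin> S \<Longrightarrow> g d = 0"
  shows "eventually (\<lambda>n. dyadic_step g S (N + n) d = g d) sequentially"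
proof (cases "d \<in> S")
  case True
  then show ?thesis by (intro always_eventually allI dyadic_step_eq_on_support) auto
next
  case False
  have "\<forall>s\<in>S. eventually (\<lambda>n. s < d \<longrightarrow> 1 / 2 ^ (N + n) \<le> d - s) sequentially"
  proof
    fix s assume "s \<in> S"
    show "eventually (\<lambda>n. s < d \<longrightarrow> 1 / 2 ^ (N + n) \<le> d - s) sequentially"
    proof (cases "s < d")
      case True
      then show ?thesis
        using eventually_inverse_power_2_le[of "d - s" N] by (auto elim: eventually_mono)
    qed simp
  qed
  then have "eventually (\<lambda>n. \<forall>s\<in>S. s < d \<longrightarrow> 1 / 2 ^ (N + n) \<le> d - s) sequentially"
    using S(1) by (simp add: eventually_ball_finite)
  then show ?thesis
    by (rule eventually_mono) (use False assms in \<open>auto intro: dyadic_step_eq_0\<close>)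
qed

end

theorem proposition3p13:
  fixes \<beta> :: "real \<Rightarrow> real" and p :: real
  assumes "\<forall>d\<in>dyadics. \<beta> d > 0"
    and "0 < p" and "p < 1/2"
    and "(\<lambda>d. \<beta> d powr p) summable_on dyadics"
  shows "\<forall>g\<in>finsupp_D. \<exists>gs :: nat \<Rightarrow> real \<Rightarrow> int.
           (\<forall>n. gs n \<in> Zfr \<and> nonsingular_aut (mD \<beta>) (shift (gs n))) \<and>
           weak_conv (mD \<beta>) (\<lambda>n. shift (gs n)) (shift g)"
proof
  fix g assume g: "g \<in> finsupp_D"
  interpret gaussian_product_summable \<beta>
    using assms summable_on_min_1_sqrt_of_powr by unfold_locales auto
  define S where "S = {d \<in> dyadics. g d \<noteq> 0}"
  have S: "finite S" "S \<subseteq> dyadics" and g_off_S: "\<And>d. d \<notin> S \<Longrightarrow> g d = 0"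
    using g by (auto simp: S_def finsupp_D_def)
  obtain N where N: "1 \<le> N" "\<And>s. s \<in> S \<Longrightarrow> \<exists>a::nat. s = real a / 2 ^ N"
    using finite_dyadics_common_denominator[OF S] by blast
  define G where "G = (\<Sum>s\<in>S. \<bar>real_of_int (g s)\<bar>)"
  have g_bounded: "\<bar>real_of_int (g d)\<bar> \<le> G" for d
    using S(1) g_off_S[of d] by (cases "d \<in> S") (auto simp: G_def intro: member_le_sum sum_nonneg)
  let ?gs = "\<lambda>n. dyadic_step g S (N + n)"
  have "?gs n \<in> Zfr" for n
    using S N by (intro dyadic_step_in_Zfr) auto
  moreover have "nonsingular_aut (mD \<beta>) (shift (?gs n))" for n
    unfolding mD_eq using abs_dyadic_step_le by (rule nonsingular_aut_shift)
  moreover have "weak_conv (mD \<beta>) (\<lambda>n. shift (?gs n)) (shift g)"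
    unfolding mD_eq using g_bounded abs_dyadic_step_le[of g S, folded G_def]
      eventually_dyadic_step_eq[OF S N(2) g_off_S] by (rule weak_conv_shift)
  ultimately show "\<exists>gs. (\<forall>n. gs n \<in> Zfr \<and> nonsingular_aut (mD \<beta>) (shift (gs n))) \<and>
      weak_conv (mD \<beta>) (\<lambda>n. shift (gs n)) (shift g)"
    by (intro exI[of _ ?gs]) blast
qed

end
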